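(* Let $n=2k$ with $k\ge1$, let $G_1,\dots,G_n$ be rooted graphs and let $G$ be the decorated path obtained from them, with path vertices $1,\dots,n$. Assume $\alpha_i^{G_i}=\alpha_{n+1-i}^{G_{n+1-i}}$ for all $i$, and that vertices $1$ and $n$ are strongly cospectral in $G$. Fix a sign $s\in\{+,-\}$. Then for a real number $\theta$ the following are equivalent: (i) $\theta\in\Phi_{1n}^s(G)$; (ii) $G[\theta]$ is well defined and $\theta\in\Phi_{1n}^s(G[\theta])$; (iii) $G[\theta]$ is well defined and $\theta$ is an eigenvalue of $A(G^s[\theta])$ in the eigenvalue support of vertex $1$; (iv) $\theta$ is an eigenvalue of $A(G^s)$ in the eigenvalue support of vertex $1$ (equivalently, $\alpha_1^{G^s}(\theta)=0$).
   Context: For a (possibly weighted, possibly with loops) graph $H$ with symmetric real adjacency matrix $A(H)$ (a loop of weight $w$ at $i$ contributes $w$ to the diagonal entry $(i,i)$), $\phi^H=\det(xI-A(H))$ and $\alpha_i^H=\phi^H/\phi^{H\setminus i}$. For an eigenvalue $\theta$, $E_\theta$ is the orthogonal projection onto the eigenspace; the eigenvalue support of $i$ is the set of eigenvalues $\theta$ with $E_\theta e_i\neq0$. Vertices $i,j$ are strongly cospectral if $E_\theta e_i=\pm E_\theta e_j$ for all eigenvalues $\theta$. If $1,n$ are strongly cospectral, $\Phi_{1n}^+(H)$ (resp. $\Phi_{1n}^-(H)$) is the set of eigenvalues $\theta$ in the support of $1$ with $E_\theta e_1=E_\theta e_n$ (resp. $E_\theta e_1=-E_\theta e_n$). The decorated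 path built from pairwise disjoint rooted graphs $G_1,\dots,G_n$ is obtained from the path on vertices $1,\dots,n$ ($i\sim i+1$) by identifying the root of $G_i$ with vertex $i$; $\alpha_i^{G_i}$ is taken at this root. $G^\pm$ denotes the decorated path on vertices $1,\dots,k$ built from $G_1,\dots,G_k$, with an additional loop of weight $\pm1$ at vertex $k$. For real $\theta$ at which no $\alpha_i^{G_i}$ has a pole, $G[\theta]$ is well defined and is the weighted path on $1,\dots,n$ with unit edge weights and a loop of weight $\theta-\alpha_i^{G_i}(\theta)$ at each $i$; $G^\pm[\theta]$ is the weighted path on $1,\dots,k$ with unit edge weights, loop weight $\theta-\alpha_i^{G_i}(\theta)$ at $i<k$, and loop weight $\theta-\alpha_k^{G_k}(\theta)\pm1$ at $k$. *)

theory Defs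
  imports "Jordan_Normal_Form.Char_Poly" "HOL-Computational_Algebra.Normalized_Fraction" "HOL-Computational_Algebra.Field_as_Ring" "HOL-Computational_Algebra.Polynomial_Factorial"
begin

text \<open>Graphs are represented by their (symmetric, real) adjacency matrices; vertices
  of a matrix of dimension N are 0,...,N-1. A rooted graph is a pair (M i, r i) of a
  square symmetric real matrix and a root index r i < dim_row (M i).\<close>

definition eigenspace :: "real mat \<Rightarrow> real \<Rightarrow> real vec set" where
  "eigenspace A \<theta> = {v \<in> carrier_vec (dim_row A). A *\<^sub>v v = \<theta> \<cdot>\<^sub>v v}"

definition eig_proj :: "real mat \<Rightarrow> real \<Rightarrow> real vec \<Rightarrow> real vec" where
  "eig_proj A \<theta> x = (THE p. p \<in> eigenspace A \<theta> \<and> (\<forall>w\<in>eigenspace A \<theta>. (x - p) \<bullet> w = 0))"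

definition eig_support :: "real mat \<Rightarrow> nat \<Rightarrow> real set" where
  "eig_support A i = {\<theta>. eigenvalue A \<theta> \<and>
      eig_proj A \<theta> (unit_vec (dim_row A) i) \<noteq> 0\<^sub>v (dim_row A)}"

definition strongly_cospectral :: "real mat \<Rightarrow> nat \<Rightarrow> nat \<Rightarrow> bool" where
  "strongly_cospectral A i j \<longleftrightarrow> (\<forall>\<theta>. eigenvalue A \<theta> \<longrightarrow>
      (eig_proj A \<theta> (unit_vec (dim_row A) i) = eig_proj A \<theta> (unit_vec (dim_row A) j) \<or>
       eig_proj A \<theta> (unit_vec (dim_row A) i) = - eig_proj A \<theta> (unit_vec (dim_row A) j)))"

text \<open>Phi^s_{ij}(A) with sign s = 1 (for +) or s = -1 (for -).\<close>
definition Phi :: "real mat \<Rightarrow> real \<Rightarrow> nat \<Rightarrow> nat \<Rightarrow> real set" where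
  "Phi A s i j = {\<theta> \<in> eig_support A i.
      eig_proj A \<theta> (unit_vec (dim_row A) i) = s \<cdot>\<^sub>v eig_proj A \<theta> (unit_vec (dim_row A) j)}"

definition alpha :: "real mat \<Rightarrow> nat \<Rightarrow> real poly fract" where
  "alpha A i = Fraction_Field.Fract (char_poly A) (char_poly (mat_delete A i i))"

definition rf_pole :: "real poly fract \<Rightarrow> real \<Rightarrow> bool" where
  "rf_pole f x \<longleftrightarrow> poly (snd (quot_of_fract f)) x = 0"

definition rf_val :: "real poly fract \<Rightarrow> real \<Rightarrow> real" where
  "rf_val f x = poly (fst (quot_of_fract f)) x / poly (snd (quot_of_fract f)) x"

definition offs :: "(nat \<Rightarrow> real mat) \<Rightarrow> nat \<Rightarrow> nat" where
  "offs M i = (\<Sum>j<i. dim_row (M j))"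

text \<open>Index of path vertex i+1 (0-based i) in the decorated path = root of G_{i+1}.\<close>
definition pathv :: "(nat \<Rightarrow> real mat) \<Rightarrow> (nat \<Rightarrow> nat) \<Rightarrow> nat \<Rightarrow> nat" where
  "pathv M r i = offs M i + r i"

definition decorated_path :: "nat \<Rightarrow> (nat \<Rightarrow> real mat) \<Rightarrow> (nat \<Rightarrow> nat) \<Rightarrow> real mat" where
  "decorated_path n M r = mat (offs M n) (offs M n) (\<lambda>(a,b).
     (\<Sum>i<n. if offs M i \<le> a \<and> a < offs M (Suc i) \<and> offs M i \<le> b \<and> b < offs M (Suc i)
             then M i $$ (a - offs M i, b - offs M i) else 0)
     + (if \<exists>i. Suc i < n \<and> ((a = pathv M r i \<and> b = pathv M r (Suc i)) \<or>
                              (b = pathv M r i \<and> a = pathv M r (Suc i))) then 1 else 0))"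

definition decorated_path_loop :: "nat \<Rightarrow> (nat \<Rightarrow> real mat) \<Rightarrow> (nat \<Rightarrow> nat) \<Rightarrow> real \<Rightarrow> real mat" where
  "decorated_path_loop k M r s = mat (offs M k) (offs M k) (\<lambda>(a,b).
     decorated_path k M r $$ (a,b) + (if a = pathv M r (k - 1) \<and> b = a then s else 0))"

definition wpath :: "nat \<Rightarrow> (nat \<Rightarrow> real) \<Rightarrow> real mat" where
  "wpath n d = mat n n (\<lambda>(a,b). if a = b then d a else if a = Suc b \<or> b = Suc a then 1 else 0)"

definition path_well_defined :: "nat \<Rightarrow> (nat \<Rightarrow> real mat) \<Rightarrow> (nat \<Rightarrow> nat) \<Rightarrow> real \<Rightarrow> bool" where
  "path_well_defined n M r \<theta> \<longleftrightarrow> (\<forall>i<n. \<not> rf_pole (alpha (M i) (r i)) \<theta>)"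

definition path_at :: "nat \<Rightarrow> (nat \<Rightarrow> real mat) \<Rightarrow> (nat \<Rightarrow> nat) \<Rightarrow> real \<Rightarrow> real mat" where
  "path_at n M r \<theta> = wpath n (\<lambda>i. \<theta> - rf_val (alpha (M i) (r i)) \<theta>)"

definition path_loop_at :: "nat \<Rightarrow> (nat \<Rightarrow> real mat) \<Rightarrow> (nat \<Rightarrow> nat) \<Rightarrow> real \<Rightarrow> real \<Rightarrow> real mat" where
  "path_loop_at k M r s \<theta> =
     wpath k (\<lambda>i. \<theta> - rf_val (alpha (M i) (r i)) \<theta> + (if i = k - 1 then s else 0))"

end

(* Restricted to a rooted graph (M, r), an eigenvector u of a decorated path satisfies
   (theta - M) u = c e_r, where c collects the path neighbours of the root. For symmetric M such u
   exist exactly when c = alpha(theta) u_r, or, at a pole of alpha, when u_r = 0: the r-th column of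
   adj(x - M) solves these equations over the polynomials, and once the largest common power of
   x - theta is cancelled a derivative argument shows that it cannot vanish both at the root and in
   the defect. So where no alpha_i has a pole, the eigenvectors of G and G^s correspond to the
   solutions of the three-term recurrences y_(j-1) + y_(j+1) = alpha_j(theta) y_j of G[theta] and
   G^s[theta]. Strong cospectrality rules out poles in the support of vertex 1: a pole forces a zero
   of y, and cutting y off there gives an eigenvector that vanishes at n but not at 1. Finally, the
   alpha_j are symmetric along the path and solutions of the recurrence are unique up to scaling, so
   y_1 = s y_n holds for all solutions iff some solution is s-symmetric under the reflection, and
   s-symmetric solutions are exactly the unfoldings of solutions on the half path, the reflection
   becoming the loop of weight s. *)

theory Submission
  imports Defs "Jordan_Normal_Form.Matrix_Kernel"
begin

section \<open>Orthogonal projection onto an eigenspace\<close>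

lemma eigenspace_iff:
  fixes A :: "real mat"
  assumes A: "A \<in> carrier_mat N N"
  shows "v \<in> eigenspace A \<theta> \<longleftrightarrow>
    v \<in> carrier_vec N \<and> (\<forall>j<N. (\<Sum>l<N. A $$ (j, l) * v $ l) = \<theta> * v $ j)"
proof -
  have "A *\<^sub>v v = \<theta> \<cdot>\<^sub>v v \<longleftrightarrow> (\<forall>j<N. (A *\<^sub>v v) $ j = \<theta> * v $ j)" if "v \<in> carrier_vec N"
    using A that by (metis carrier_matD(1) carrier_vecD dim_mult_mat_vec eq_vecI index_smult_vec)
  moreover have "(A *\<^sub>v v) $ j = (\<Sum>l<N. A $$ (j, l) * v $ l)" if "v \<in> carrier_vec N" "j < N" for j
    using A that by (simp add: scalar_prod_def atLeast0LessThan)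
  ultimately show ?thesis
    using A unfolding eigenspace_def by auto
qed

lemma eigenspace_carrier: "A \<in> carrier_mat N N \<Longrightarrow> v \<in> eigenspace A \<theta> \<Longrightarrow> v \<in> carrier_vec N"
  unfolding eigenspace_def by auto

lemma eigenspace_diff_smult:
  fixes A :: "real mat"
  assumes A: "A \<in> carrier_mat N N" and u: "u \<in> eigenspace A \<theta>" and v: "v \<in> eigenspace A \<theta>"
  shows "u - a \<cdot>\<^sub>v v \<in> eigenspace A \<theta>"
proof -
  have uN: "u \<in> carrier_vec N" and vN: "v \<in> carrier_vec N"
    using u v eigenspace_carrier[OF A] by auto
  have "A *\<^sub>v (u - a \<cdot>\<^sub>v v) = A *\<^sub>v u - a \<cdot>\<^sub>v (A *\<^sub>v v)"
    using A uN vN by (simp add: mult_minus_distrib_mat_vec mult_mat_vec)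
  also have "\<dots> = \<theta> \<cdot>\<^sub>v u - a \<cdot>\<^sub>v (\<theta> \<cdot>\<^sub>v v)"
    using u v unfolding eigenspace_def by simp
  also have "\<dots> = \<theta> \<cdot>\<^sub>v (u - a \<cdot>\<^sub>v v)"
    using uN vN by (auto simp: vec_eq_iff algebra_simps)
  finally show ?thesis
    using A uN vN unfolding eigenspace_def by simp
qed

lemma eigenspace_eq_mat_kernel:
  fixes A :: "real mat"
  assumes A: "A \<in> carrier_mat N N"
  shows "eigenspace A \<theta> = mat_kernel (A - \<theta> \<cdot>\<^sub>m 1\<^sub>m N)"
proof -
  have "(\<theta> \<cdot>\<^sub>m 1\<^sub>m N) *\<^sub>v v = \<theta> \<cdot>\<^sub>v v" if "v \<in> carrier_vec N" for v
    using that by (intro eq_vecI) (auto simp: row_smult)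
  then have "(A - \<theta> \<cdot>\<^sub>m 1\<^sub>m N) *\<^sub>v v = A *\<^sub>v v - \<theta> \<cdot>\<^sub>v v" if "v \<in> carrier_vec N" for v
    using A that by (simp add: minus_mult_distrib_mat_vec)
  moreover have "A *\<^sub>v v - \<theta> \<cdot>\<^sub>v v = 0\<^sub>v N \<longleftrightarrow> A *\<^sub>v v = \<theta> \<cdot>\<^sub>v v" if "v \<in> carrier_vec N" for v
    using A that by (auto simp: vec_eq_iff)
  ultimately show ?thesis using A unfolding eigenspace_def mat_kernel_def by auto
qed

lemma eigenspace_finite_spanning_set:
  fixes A :: "real mat"
  assumes A: "A \<in> carrier_mat N N"
  obtains B where "finite B" "B \<subseteq> eigenspace A \<theta>"
    "\<And>w. w \<in> eigenspace A \<theta> \<Longrightarrow> \<exists>c. \<forall>i<N. w $ i = (\<Sum>b\<in>B. c b * b $ i)"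
proof -
  let ?K = "A - \<theta> \<cdot>\<^sub>m 1\<^sub>m N"
  have K: "?K \<in> carrier_mat N N" using A by (metis minus_carrier_mat smult_carrier_mat one_carrier_mat)
  have E: "eigenspace A \<theta> = mat_kernel ?K" by (rule eigenspace_eq_mat_kernel[OF A])
  interpret kernel N N ?K by unfold_locales (rule K)
  obtain B where B: "finite B" "Ker.basis B" using kernel_basis_exists[OF K] by auto
  then have BK: "B \<subseteq> mat_kernel ?K" and span: "Ker.span B = mat_kernel ?K"
    unfolding Ker.basis_def by auto
  have "\<exists>c. \<forall>i<N. w $ i = (\<Sum>b\<in>B. c b * b $ i)" if "w \<in> mat_kernel ?K" for w
  proof -
    have "w \<in> Ker.span B" using that span by simp
    then obtain a U where U: "finite U" "U \<subseteq> B" "w = Ker.lincomb a U"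
      unfolding Ker.span_def by auto
    have "w $ i = (\<Sum>b\<in>B. (if b \<in> U then a b else 0) * b $ i)" if "i < N" for i
    proof -
      have "U \<subseteq> mat_kernel ?K" using U(2) BK by blast
      then have "w $ i = (\<Sum>b\<in>U. a b * b $ i)" using U(3) lincomb_index[OF that] by simp
      also have "\<dots> = (\<Sum>b\<in>B. (if b \<in> U then a b else 0) * b $ i)"
        using U B(1) by (intro sum.mono_neutral_cong_left) auto
      finally show ?thesis .
    qed
    then show ?thesis by (intro exI[of _ "\<lambda>b. if b \<in> U then a b else 0"]) blast
  qed
  with B(1) BK E show thesis by (intro that) auto
qed

definition inner_upto :: "nat \<Rightarrow> (nat \<Rightarrow> real) \<Rightarrow> (nat \<Rightarrow> real) \<Rightarrow> real" where
  "inner_upto N f g = (\<Sum>i<N. f i * g i)"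

lemma inner_upto_sum_right:
  "inner_upto N f (\<lambda>i. \<Sum>k\<in>I. c k * F k i) = (\<Sum>k\<in>I. c k * inner_upto N f (F k))"
proof -
  have "inner_upto N f (\<lambda>i. \<Sum>k\<in>I. c k * F k i) = (\<Sum>i<N. \<Sum>k\<in>I. c k * (f i * F k i))"
    unfolding inner_upto_def by (simp add: sum_distrib_left mult.left_commute)
  also have "\<dots> = (\<Sum>k\<in>I. \<Sum>i<N. c k * (f i * F k i))" by (rule sum.swap)
  finally show ?thesis unfolding inner_upto_def by (simp add: sum_distrib_left)
qed

lemma inner_upto_diff_smult_left:
  "inner_upto N (\<lambda>i. f i - a * g i) h = inner_upto N f h - a * inner_upto N g h"
  unfolding inner_upto_def by (simp add: algebra_simps sum_subtractf sum_distrib_left)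

lemma inner_upto_add_right:
  "inner_upto N f (\<lambda>i. g i + h i) = inner_upto N f g + inner_upto N f h"
  unfolding inner_upto_def by (simp add: algebra_simps sum.distrib)

lemma inner_upto_self_eq_0: "inner_upto N f f = 0 \<Longrightarrow> i < N \<Longrightarrow> f i = 0"
  unfolding inner_upto_def by (subst (asm) sum_nonneg_eq_0_iff) auto

text \<open>Gram--Schmidt in coordinates: one more vector F v is handled by subtracting from the
  residual of x its component along the residual of F v.\<close>
lemma orthogonal_residual_exists:
  assumes "finite I"
  shows "\<exists>c. \<forall>k\<in>I. inner_upto N (\<lambda>i. x i - (\<Sum>k'\<in>I. c k' * F k' i)) (F k) = 0"
  using assms
proof (induction I arbitrary: x rule: finite_induct)
  case (insert v I)
  obtain c1 where c1: "\<forall>k\<in>I. inner_upto N (\<lambda>i. x i - (\<Sum>k'\<in>I. c1 k' * F k' i)) (F k) = 0"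
    using insert.IH by blast
  obtain c2 where c2: "\<forall>k\<in>I. inner_upto N (\<lambda>i. F v i - (\<Sum>k'\<in>I. c2 k' * F k' i)) (F k) = 0"
    using insert.IH by blast
  define r1 where "r1 i = x i - (\<Sum>k'\<in>I. c1 k' * F k' i)" for i
  define r2 where "r2 i = F v i - (\<Sum>k'\<in>I. c2 k' * F k' i)" for i
  define \<tau> where "\<tau> = inner_upto N r1 r2 / inner_upto N r2 r2"
  define c where "c k = (if k = v then \<tau> else c1 k - \<tau> * c2 k)" for k
  have residual: "x i - (\<Sum>k'\<in>insert v I. c k' * F k' i) = r1 i - \<tau> * r2 i" for i
  proof -
    have "(\<Sum>k'\<in>insert v I. c k' * F k' i) = \<tau> * F v i + (\<Sum>k'\<in>I. (c1 k' - \<tau> * c2 k') * F k' i)"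
      using insert.hyps unfolding c_def by (auto intro!: sum.cong)
    then show ?thesis
      unfolding r1_def r2_def by (simp add: algebra_simps sum_subtractf sum_distrib_left)
  qed
  have orth_comb: "inner_upto N (\<lambda>i. r1 i - \<tau> * r2 i) (\<lambda>i. \<Sum>k'\<in>I. c2 k' * F k' i) = 0"
    using c1 c2 unfolding inner_upto_sum_right inner_upto_diff_smult_left r1_def r2_def by simp
  have orth_r2: "inner_upto N (\<lambda>i. r1 i - \<tau> * r2 i) r2 = 0"
  proof (cases "inner_upto N r2 r2 = 0")
    case True
    then have "r2 i = 0" if "i < N" for i using inner_upto_self_eq_0 that by blast
    then have "inner_upto N r1 r2 = 0" unfolding inner_upto_def by (intro sum.neutral) simp
    with True show ?thesis unfolding inner_upto_diff_smult_left by simp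
  qed (simp only: inner_upto_diff_smult_left, simp add: \<tau>_def)
  have "F v = (\<lambda>i. r2 i + (\<Sum>k'\<in>I. c2 k' * F k' i))" unfolding r2_def by simp
  then have "inner_upto N (\<lambda>i. r1 i - \<tau> * r2 i) (F v) = 0"
    using orth_r2 orth_comb by (simp only: inner_upto_add_right)
  moreover have "inner_upto N (\<lambda>i. r1 i - \<tau> * r2 i) (F k) = 0" if "k \<in> I" for k
    using c1 c2 that unfolding inner_upto_diff_smult_left r1_def r2_def by simp
  ultimately have "\<forall>k\<in>insert v I. inner_upto N (\<lambda>i. x i - (\<Sum>k'\<in>insert v I. c k' * F k' i)) (F k) = 0"
    unfolding residual by blast
  then show ?case by blast
qed simp

lemma orthogonal_projection_onto_eigenspace_exists:
  fixes A :: "real mat"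
  assumes A: "A \<in> carrier_mat N N" and x: "x \<in> carrier_vec N"
  obtains p where "p \<in> eigenspace A \<theta>" "\<And>w. w \<in> eigenspace A \<theta> \<Longrightarrow> (x - p) \<bullet> w = 0"
proof -
  obtain B where B: "finite B" "B \<subseteq> eigenspace A \<theta>"
    and span: "\<And>w. w \<in> eigenspace A \<theta> \<Longrightarrow> \<exists>d. \<forall>i<N. w $ i = (\<Sum>b\<in>B. d b * b $ i)"
    using eigenspace_finite_spanning_set[OF A, where \<theta> = \<theta>] by blast
  obtain c where c: "\<forall>b\<in>B. inner_upto N (\<lambda>i. x $ i - (\<Sum>b'\<in>B. c b' * b' $ i)) (\<lambda>i. b $ i) = 0"
    using orthogonal_residual_exists[OF B(1), of N "\<lambda>i. x $ i" "\<lambda>b i. b $ i"] by blast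
  define p where "p = vec N (\<lambda>i. \<Sum>b\<in>B. c b * b $ i)"
  have "p \<in> eigenspace A \<theta>" unfolding eigenspace_iff[OF A]
  proof (intro conjI allI impI)
    fix j assume j: "j < N"
    have "(\<Sum>l<N. A $$ (j, l) * p $ l) = (\<Sum>l<N. \<Sum>b\<in>B. c b * (A $$ (j, l) * b $ l))"
      unfolding p_def by (simp add: sum_distrib_left mult.left_commute)
    also have "\<dots> = (\<Sum>b\<in>B. c b * (\<Sum>l<N. A $$ (j, l) * b $ l))"
      by (subst sum.swap) (simp add: sum_distrib_left)
    also have "\<dots> = (\<Sum>b\<in>B. c b * (\<theta> * b $ j))"
      using B(2) eigenspace_iff[OF A] j by (auto intro!: sum.cong)
    finally show "(\<Sum>l<N. A $$ (j, l) * p $ l) = \<theta> * p $ j"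
      unfolding p_def using j by (simp add: sum_distrib_left algebra_simps)
  qed (simp add: p_def)
  moreover have "(x - p) \<bullet> w = 0" if w: "w \<in> eigenspace A \<theta>" for w
  proof -
    obtain d where d: "\<forall>i<N. w $ i = (\<Sum>b\<in>B. d b * b $ i)" using span[OF w] by blast
    have "(x - p) \<bullet> w
        = inner_upto N (\<lambda>i. x $ i - (\<Sum>b'\<in>B. c b' * b' $ i)) (\<lambda>i. \<Sum>b\<in>B. d b * b $ i)"
      using x eigenspace_carrier[OF A w] d
      by (simp add: scalar_prod_def inner_upto_def atLeast0LessThan p_def)
    also have "\<dots> = 0" using c unfolding inner_upto_sum_right by simp
    finally show ?thesis .
  qed
  ultimately show thesis by (rule that)
qed

lemma eig_proj_eqI:
  fixes A :: "real mat"
  assumes A: "A \<in> carrier_mat N N" and x: "x \<in> carrier_vec N"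
    and p: "p \<in> eigenspace A \<theta>" "\<And>w. w \<in> eigenspace A \<theta> \<Longrightarrow> (x - p) \<bullet> w = 0"
  shows "eig_proj A \<theta> x = p"
  unfolding eig_proj_def
proof (rule the_equality)
  show "p \<in> eigenspace A \<theta> \<and> (\<forall>w\<in>eigenspace A \<theta>. (x - p) \<bullet> w = 0)" using p by blast
  fix q assume q: "q \<in> eigenspace A \<theta> \<and> (\<forall>w\<in>eigenspace A \<theta>. (x - q) \<bullet> w = 0)"
  have pN: "p \<in> carrier_vec N" and qN: "q \<in> carrier_vec N" and qp: "q - p \<in> carrier_vec N"
    using p q eigenspace_carrier[OF A] by auto
  have "q - 1 \<cdot>\<^sub>v p \<in> eigenspace A \<theta>" using eigenspace_diff_smult[OF A] p q by blast
  then have "(x - p) \<bullet> (q - p) - (x - q) \<bullet> (q - p) = 0" using p q by simp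
  moreover have "(x - p) \<bullet> (q - p) - (x - q) \<bullet> (q - p) = (q - p) \<bullet> (q - p)"
    using minus_scalar_prod_distrib[OF x pN qp] minus_scalar_prod_distrib[OF x qN qp]
      minus_scalar_prod_distrib[OF qN pN qp] by linarith
  ultimately have "q - p = 0\<^sub>v N" using conjugate_square_eq_0_vec[OF qp] by simp
  then show "q = p" using pN qN by (auto simp: vec_eq_iff)
qed

lemma eig_proj_spec:
  fixes A :: "real mat"
  assumes A: "A \<in> carrier_mat N N" and x: "x \<in> carrier_vec N"
  shows "eig_proj A \<theta> x \<in> eigenspace A \<theta>"
    and "w \<in> eigenspace A \<theta> \<Longrightarrow> (x - eig_proj A \<theta> x) \<bullet> w = 0"
proof -
  obtain p where "p \<in> eigenspace A \<theta>" "\<And>w. w \<in> eigenspace A \<theta> \<Longrightarrow> (x - p) \<bullet> w = 0"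
    using orthogonal_projection_onto_eigenspace_exists[OF A x, where \<theta> = \<theta>] by blast
  with eig_proj_eqI[OF A x this] show "eig_proj A \<theta> x \<in> eigenspace A \<theta>"
    "w \<in> eigenspace A \<theta> \<Longrightarrow> (x - eig_proj A \<theta> x) \<bullet> w = 0" by simp_all
qed

lemma eig_proj_unit_vec_inner:
  fixes A :: "real mat"
  assumes A: "A \<in> carrier_mat N N" and i: "i < N" and w: "w \<in> eigenspace A \<theta>"
  shows "eig_proj A \<theta> (unit_vec N i) \<bullet> w = w $ i"
proof -
  let ?P = "eig_proj A \<theta> (unit_vec N i)"
  have PN: "?P \<in> carrier_vec N" and wN: "w \<in> carrier_vec N"
    using eig_proj_spec(1)[OF A unit_vec_carrier] w eigenspace_carrier[OF A] by auto
  have "(unit_vec N i - ?P) \<bullet> w = unit_vec N i \<bullet> w - ?P \<bullet> w"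
    by (rule minus_scalar_prod_distrib[OF unit_vec_carrier PN wN])
  moreover have "(unit_vec N i - ?P) \<bullet> w = 0" by (rule eig_proj_spec(2)[OF A unit_vec_carrier w])
  ultimately show ?thesis using wN i by simp
qed

lemma eig_proj_unit_vec_eq_smult_iff:
  fixes A :: "real mat"
  assumes A: "A \<in> carrier_mat N N" and i: "i < N" and j: "j < N"
  shows "eig_proj A \<theta> (unit_vec N i) = s \<cdot>\<^sub>v eig_proj A \<theta> (unit_vec N j)
    \<longleftrightarrow> (\<forall>w\<in>eigenspace A \<theta>. w $ i = s * w $ j)"
proof -
  let ?Pi = "eig_proj A \<theta> (unit_vec N i)" and ?Pj = "eig_proj A \<theta> (unit_vec N j)"
  have Pi: "?Pi \<in> eigenspace A \<theta>" and Pj: "?Pj \<in> eigenspace A \<theta>"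
    using eig_proj_spec(1)[OF A unit_vec_carrier] by auto
  then have PiN: "?Pi \<in> carrier_vec N" and PjN: "?Pj \<in> carrier_vec N"
    using eigenspace_carrier[OF A] by auto
  show ?thesis
  proof
    assume eq: "?Pi = s \<cdot>\<^sub>v ?Pj"
    show "\<forall>w\<in>eigenspace A \<theta>. w $ i = s * w $ j"
    proof
      fix w assume w: "w \<in> eigenspace A \<theta>"
      have "w $ i = s * (?Pj \<bullet> w)"
        using eig_proj_unit_vec_inner[OF A i w] eq PjN eigenspace_carrier[OF A w] by simp
      then show "w $ i = s * w $ j" using eig_proj_unit_vec_inner[OF A j w] by simp
    qed
  next
    assume H: "\<forall>w\<in>eigenspace A \<theta>. w $ i = s * w $ j"
    define D where "D = ?Pi - s \<cdot>\<^sub>v ?Pj"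
    have D: "D \<in> eigenspace A \<theta>" unfolding D_def by (rule eigenspace_diff_smult[OF A Pi Pj])
    have DN: "D \<in> carrier_vec N" unfolding D_def using PiN PjN by simp
    have "D \<bullet> D = ?Pi \<bullet> D - s * (?Pj \<bullet> D)"
      unfolding D_def using PiN PjN DN by (simp add: minus_scalar_prod_distrib)
    also have "\<dots> = 0"
      using eig_proj_unit_vec_inner[OF A i D] eig_proj_unit_vec_inner[OF A j D] H D by simp
    finally have "D = 0\<^sub>v N" using conjugate_square_eq_0_vec[OF DN] by simp
    then show "?Pi = s \<cdot>\<^sub>v ?Pj" unfolding D_def using PiN PjN by (auto simp: vec_eq_iff)
  qed
qed

lemma eig_support_iff:
  fixes A :: "real mat"
  assumes A: "A \<in> carrier_mat N N" and i: "i < N"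
  shows "\<theta> \<in> eig_support A i \<longleftrightarrow> (\<exists>w\<in>eigenspace A \<theta>. w $ i \<noteq> 0)"
proof -
  let ?P = "eig_proj A \<theta> (unit_vec N i)"
  have "?P \<in> carrier_vec N"
    using eig_proj_spec(1)[OF A unit_vec_carrier] eigenspace_carrier[OF A] by blast
  then have "?P = 0 \<cdot>\<^sub>v ?P \<longleftrightarrow> ?P = 0\<^sub>v N" by (auto simp: vec_eq_iff)
  then have P0: "?P = 0\<^sub>v N \<longleftrightarrow> (\<forall>w\<in>eigenspace A \<theta>. w $ i = 0)"
    using eig_proj_unit_vec_eq_smult_iff[OF A i i, of \<theta> 0] by simp
  have "eigenvalue A \<theta>" if "w \<in> eigenspace A \<theta>" "w $ i \<noteq> 0" for w
  proof -
    have "w \<noteq> 0\<^sub>v N" using that(2) i by auto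
    then show ?thesis using that(1) A unfolding eigenvalue_def eigenvector_def eigenspace_def by auto
  qed
  moreover have "dim_row A = N" using A by simp
  ultimately show ?thesis unfolding eig_support_def using P0 by blast
qed

lemma Phi_iff:
  fixes A :: "real mat"
  assumes A: "A \<in> carrier_mat N N" and i: "i < N" and j: "j < N"
  shows "\<theta> \<in> Phi A s i j \<longleftrightarrow>
    (\<exists>w\<in>eigenspace A \<theta>. w $ i \<noteq> 0) \<and> (\<forall>w\<in>eigenspace A \<theta>. w $ i = s * w $ j)"
proof -
  have dim: "dim_row A = N" using A by simp
  show ?thesis
    unfolding Phi_def dim mem_Collect_eq eig_support_iff[OF A i] eig_proj_unit_vec_eq_smult_iff[OF A i j]
    by (rule refl)
qed

lemma strongly_cospectral_eigenspace:
  fixes A :: "real mat"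
  assumes A: "A \<in> carrier_mat N N" and i: "i < N" and j: "j < N"
    and sc: "strongly_cospectral A i j" and w: "w \<in> eigenspace A \<theta>" "w $ i \<noteq> 0"
  shows "(\<forall>w\<in>eigenspace A \<theta>. w $ i = w $ j) \<or> (\<forall>w\<in>eigenspace A \<theta>. w $ i = - w $ j)"
proof -
  let ?Pi = "eig_proj A \<theta> (unit_vec N i)" and ?Pj = "eig_proj A \<theta> (unit_vec N j)"
  have "eigenvalue A \<theta>" using eig_support_iff[OF A i] w unfolding eig_support_def by blast
  moreover have "dim_row A = N" using A by simp
  ultimately have "?Pi = ?Pj \<or> ?Pi = - ?Pj" using sc unfolding strongly_cospectral_def by metis
  moreover have "?Pj = 1 \<cdot>\<^sub>v ?Pj" "- ?Pj = (-1) \<cdot>\<^sub>v ?Pj" by (auto simp: vec_eq_iff)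
  ultimately have "?Pi = 1 \<cdot>\<^sub>v ?Pj \<or> ?Pi = (-1) \<cdot>\<^sub>v ?Pj" by metis
  then show ?thesis
    unfolding eig_proj_unit_vec_eq_smult_iff[OF A i j] by simp
qed

section \<open>The root defect of a rooted graph\<close>

text \<open>The pairs (u r, c) with (\<theta> - M) u = c e_r. Away from the poles of alpha they are exactly
  those with c = alpha(\<theta>) u r, which is how alpha enters the eigenvector equations of a
  decorated path.\<close>
definition root_defect :: "real mat \<Rightarrow> nat \<Rightarrow> real \<Rightarrow> real \<Rightarrow> real \<Rightarrow> bool" where
  "root_defect M r \<theta> t c \<longleftrightarrow> (\<exists>u. u r = t \<and>
     (\<forall>j<dim_row M. \<theta> * u j - (\<Sum>l<dim_row M. M $$ (j, l) * u l) = (if j = r then c else 0)))"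

lemma root_defect_zero: "root_defect M r \<theta> 0 0"
  unfolding root_defect_def by (intro exI[of _ "\<lambda>_. 0"]) simp

lemma root_defect_scale:
  assumes "root_defect M r \<theta> t c"
  shows "root_defect M r \<theta> (x * t) (x * c)"
proof -
  obtain u where u: "u r = t"
    "\<forall>j<dim_row M. \<theta> * u j - (\<Sum>l<dim_row M. M $$ (j, l) * u l) = (if j = r then c else 0)"
    using assms unfolding root_defect_def by blast
  have "\<theta> * (x * u j) - (\<Sum>l<dim_row M. M $$ (j, l) * (x * u l))
      = x * (\<theta> * u j - (\<Sum>l<dim_row M. M $$ (j, l) * u l))" for j
    by (simp add: algebra_simps sum_distrib_left)
  then show ?thesis
    using u unfolding root_defect_def by (intro exI[of _ "\<lambda>j. x * u j"]) auto
qed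

lemma symmetric_residual_swap:
  fixes M :: "real mat"
  assumes M: "M \<in> carrier_mat N N" "transpose_mat M = M"
  shows "(\<Sum>j<N. w j * (\<theta> * u j - (\<Sum>l<N. M $$ (j, l) * u l)))
       = (\<Sum>j<N. u j * (\<theta> * w j - (\<Sum>l<N. M $$ (j, l) * w l)))"
proof -
  have sym: "M $$ (j, l) = M $$ (l, j)" if "j < N" "l < N" for j l
    using M that by (metis carrier_matD index_transpose_mat(1))
  have "(\<Sum>j<N. w j * (\<Sum>l<N. M $$ (j, l) * u l)) = (\<Sum>j<N. \<Sum>l<N. w j * M $$ (j, l) * u l)"
    by (simp add: sum_distrib_left mult.assoc)
  also have "\<dots> = (\<Sum>l<N. \<Sum>j<N. w j * M $$ (j, l) * u l)" by (rule sum.swap)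
  also have "\<dots> = (\<Sum>l<N. u l * (\<Sum>j<N. M $$ (l, j) * w j))"
    using sym by (auto simp: sum_distrib_left intro!: sum.cong)
  finally show ?thesis
    by (simp add: right_diff_distrib sum_subtractf sum_distrib_left algebra_simps)
qed

lemma root_defect_proportional:
  fixes M :: "real mat"
  assumes M: "M \<in> carrier_mat N N" "transpose_mat M = M" and r: "r < N"
    and "root_defect M r \<theta> t c" and "root_defect M r \<theta> t' c'"
  shows "t * c' = t' * c"
proof -
  let ?res = "\<lambda>u j. \<theta> * u j - (\<Sum>l<N. M $$ (j, l) * u l)"
  obtain u where u: "u r = t" "\<forall>j<N. ?res u j = (if j = r then c else 0)"
    using assms(4) M unfolding root_defect_def by auto
  obtain u' where u': "u' r = t'" "\<forall>j<N. ?res u' j = (if j = r then c' else 0)"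
    using assms(5) M unfolding root_defect_def by auto
  define w where "w j = c' * u j - c * u' j" for j
  have w: "?res w j = 0" if "j < N" for j
  proof -
    have "?res w j = c' * ?res u j - c * ?res u' j"
      unfolding w_def by (simp add: algebra_simps sum_distrib_left sum_subtractf)
    then show ?thesis using u u' that by auto
  qed
  have pairing: "d * w r = 0" if "\<forall>j<N. ?res v j = (if j = r then d else 0)" for v d
  proof -
    have "(\<Sum>j<N. w j * ?res v j) = (\<Sum>j<N. v j * ?res w j)"
      by (rule symmetric_residual_swap[OF M])
    then have "(\<Sum>j<N. w j * (if j = r then d else 0)) = 0" using that w by simp
    then show ?thesis using r by (simp add: if_distrib sum.If_cases mult.commute)
  qed
  have "c * w r = 0" "c' * w r = 0" using pairing u(2) u'(2) by blast+
  moreover have "w r = c' * t - c * t'" unfolding w_def using u u' by simp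
  ultimately show ?thesis by (cases "c = 0 \<and> c' = 0") (auto simp: algebra_simps)
qed

lemma root_defect_iff_proportional:
  fixes M :: "real mat"
  assumes M: "M \<in> carrier_mat N N" "transpose_mat M = M" and r: "r < N"
    and d: "root_defect M r \<theta> X Y" and XY: "X \<noteq> 0 \<or> Y \<noteq> 0"
  shows "root_defect M r \<theta> t c \<longleftrightarrow> t * Y = X * c"
proof
  assume "root_defect M r \<theta> t c"
  then show "t * Y = X * c" using root_defect_proportional[OF M r _ d] by blast
next
  assume tc: "t * Y = X * c"
  show "root_defect M r \<theta> t c"
  proof (cases "X = 0")
    case True
    then have "t = 0" using tc XY by simp
    then show ?thesis using root_defect_scale[OF d, of "c / Y"] True XY by simp
  next
    case False
    have "c = t / X * Y" using tc False by (simp add: field_simps)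
    then show ?thesis using root_defect_scale[OF d, of "t / X"] False by simp
  qed
qed

definition poly_root_defect :: "real mat \<Rightarrow> nat \<Rightarrow> (nat \<Rightarrow> real poly) \<Rightarrow> real poly \<Rightarrow> bool" where
  "poly_root_defect M r b P \<longleftrightarrow> (\<forall>j<dim_row M.
     [:0, 1:] * b j - (\<Sum>l<dim_row M. Polynomial.smult (M $$ (j, l)) (b l)) = (if j = r then P else 0))"

lemma adjugate_column_poly_root_defect:
  fixes M :: "real mat"
  assumes M: "M \<in> carrier_mat N N" and r: "r < N"
  defines "a \<equiv> \<lambda>l. adj_mat (char_poly_matrix M) $$ (l, r)"
  shows "poly_root_defect M r a (char_poly M)" and "a r = char_poly (mat_delete M r r)"
proof -
  let ?C = "char_poly_matrix M"
  have C: "?C \<in> carrier_mat N N" using M by simp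
  have entry: "?C $$ (j, l) = (if j = l then [:0, 1:] else 0) + [:- M $$ (j, l):]"
    if "j < N" "l < N" for j l
    using M that unfolding char_poly_matrix_def by auto
  show "poly_root_defect M r a (char_poly M)"
    unfolding poly_root_defect_def
  proof (intro allI impI)
    fix j assume "j < dim_row M"
    then have j: "j < N" using M by simp
    have "(if j = r then char_poly M else 0) = (?C * adj_mat ?C) $$ (j, r)"
      using adj_mat[OF C] j r unfolding char_poly_def by simp
    also have "\<dots> = (\<Sum>l<N. ?C $$ (j, l) * a l)"
      using j r C adj_mat(1)[OF C] unfolding a_def by (auto simp: scalar_prod_def intro!: sum.cong)
    also have "\<dots> = (\<Sum>l<N. (if j = l then [:0, 1:] * a l else 0) - Polynomial.smult (M $$ (j, l)) (a l))"
      by (rule sum.cong, simp, subst entry[OF j], auto simp: algebra_simps)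
    also have "\<dots> = [:0, 1:] * a j - (\<Sum>l<N. Polynomial.smult (M $$ (j, l)) (a l))"
      using j by (simp add: sum_subtractf)
    finally show "[:0, 1:] * a j - (\<Sum>l<dim_row M. Polynomial.smult (M $$ (j, l)) (a l))
        = (if j = r then char_poly M else 0)"
      using M by simp
  qed
  have "a r = det (mat_delete ?C r r)"
    unfolding a_def using r C by (simp add: adj_mat_def cofactor_def)
  also have "mat_delete ?C r r = char_poly_matrix (mat_delete M r r)"
    using r M by (auto simp: mat_delete_def char_poly_matrix_def)
  finally show "a r = char_poly (mat_delete M r r)" unfolding char_poly_def .
qed

lemma poly_root_defect_div:
  fixes M :: "real mat"
  assumes d: "poly_root_defect M r a p" and r: "r < dim_row M"
    and q: "q \<noteq> 0" and q_dvd: "\<And>j. j < dim_row M \<Longrightarrow> q dvd a j"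
  shows "p = q * (p div q)" and "poly_root_defect M r (\<lambda>j. a j div q) (p div q)"
proof -
  let ?N = "dim_row M"
  have p: "p = [:0, 1:] * a r - (\<Sum>l<?N. Polynomial.smult (M $$ (r, l)) (a l))"
    using d r unfolding poly_root_defect_def by auto
  have "q dvd p" unfolding p
    by (intro dvd_diff dvd_mult q_dvd[OF r] dvd_sum dvd_smult q_dvd) auto
  then show pq: "p = q * (p div q)" by simp
  show "poly_root_defect M r (\<lambda>j. a j div q) (p div q)" unfolding poly_root_defect_def
  proof (intro allI impI)
    fix j assume j: "j < ?N"
    have "q * ([:0, 1:] * (a j div q) - (\<Sum>l<?N. Polynomial.smult (M $$ (j, l)) (a l div q)))
        = [:0, 1:] * a j - (\<Sum>l<?N. Polynomial.smult (M $$ (j, l)) (a l))"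
      using q_dvd j by (simp add: algebra_simps sum_distrib_left mult_smult_right)
    also have "\<dots> = q * (if j = r then p div q else 0)"
      using d j pq unfolding poly_root_defect_def by auto
    finally show "[:0, 1:] * (a j div q) - (\<Sum>l<?N. Polynomial.smult (M $$ (j, l)) (a l div q))
        = (if j = r then p div q else 0)"
      using q by simp
  qed
qed

lemma poly_root_defect_cancel_root:
  fixes M :: "real mat"
  assumes d: "poly_root_defect M r a p" and ar: "a r \<noteq> 0" and r: "r < dim_row M"
  obtains m b P where "\<And>j. j < dim_row M \<Longrightarrow> a j = [:-\<theta>, 1:] ^ m * b j"
    "p = [:-\<theta>, 1:] ^ m * P" "poly_root_defect M r b P" "\<exists>j<dim_row M. poly (b j) \<theta> \<noteq> 0"
proof -
  let ?N = "dim_row M"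
  define S where "S = {Polynomial.order \<theta> (a j) | j. j < ?N \<and> a j \<noteq> 0}"
  have S: "finite S" "Polynomial.order \<theta> (a r) \<in> S" unfolding S_def using ar r by auto
  define q where "q = [:-\<theta>, 1:] ^ Min S"
  have q0: "q \<noteq> 0" unfolding q_def by simp
  have q_dvd: "q dvd a j" if "j < ?N" for j
  proof (cases "a j = 0")
    case False
    then have "Polynomial.order \<theta> (a j) \<in> S" unfolding S_def using that by auto
    then have "Min S \<le> Polynomial.order \<theta> (a j)" by (rule Min_le[OF S(1)])
    then have "q dvd [:-\<theta>, 1:] ^ Polynomial.order \<theta> (a j)" unfolding q_def by (rule le_imp_power_dvd)
    also have "\<dots> dvd a j" by (rule order_1)
    finally show ?thesis .
  qed simp
  have ab: "a j = q * (a j div q)" if "j < ?N" for j using q_dvd[OF that] by simp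
  have "\<exists>j<?N. poly (a j div q) \<theta> \<noteq> 0"
  proof -
    have "Min S \<in> S" using S Min_in by blast
    then obtain j where j: "j < ?N" "a j \<noteq> 0" "Polynomial.order \<theta> (a j) = Min S"
      unfolding S_def by auto
    then have bj: "a j div q \<noteq> 0" using ab by (metis mult_zero_right)
    have "Polynomial.order \<theta> (a j) = Polynomial.order \<theta> q + Polynomial.order \<theta> (a j div q)"
      using ab[OF j(1)] q0 bj by (metis order_mult mult_eq_0_iff)
    then have "Polynomial.order \<theta> (a j div q) = 0" using j(3) unfolding q_def by (simp add: order_power_n_n)
    then show ?thesis using bj j(1) by (auto simp: order_root)
  qed
  then show thesis
    using that[of "Min S" "\<lambda>j. a j div q" "p div q"] ab poly_root_defect_div[OF d r q0 q_dvd]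
    unfolding q_def by blast
qed

lemma poly_root_defect_eval:
  assumes "poly_root_defect M r b P" "j < dim_row M"
  shows "\<theta> * poly (b j) \<theta> - (\<Sum>l<dim_row M. M $$ (j, l) * poly (b l) \<theta>)
    = (if j = r then poly P \<theta> else 0)"
proof -
  have "poly ([:0, 1:] * b j - (\<Sum>l<dim_row M. Polynomial.smult (M $$ (j, l)) (b l))) \<theta>
      = poly (if j = r then P else 0) \<theta>"
    using assms unfolding poly_root_defect_def by auto
  then show ?thesis by (simp add: poly_sum)
qed

lemma poly_root_defect_pderiv_eval:
  assumes "poly_root_defect M r b P" "j < dim_row M"
  shows "poly (b j) \<theta> + (\<theta> * poly (pderiv (b j)) \<theta>
      - (\<Sum>l<dim_row M. M $$ (j, l) * poly (pderiv (b l)) \<theta>))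
    = (if j = r then poly (pderiv P) \<theta> else 0)"
proof -
  have "poly (pderiv ([:0, 1:] * b j - (\<Sum>l<dim_row M. Polynomial.smult (M $$ (j, l)) (b l)))) \<theta>
      = poly (pderiv (if j = r then P else 0)) \<theta>"
    using assms unfolding poly_root_defect_def by auto
  then show ?thesis
    by (simp add: poly_sum pderiv_mult pderiv_diff pderiv_sum pderiv_smult pderiv_pCons algebra_simps)
qed

lemma root_defect_of_poly_root_defect:
  "poly_root_defect M r b P \<Longrightarrow> root_defect M r \<theta> (poly (b r) \<theta>) (poly P \<theta>)"
  unfolding root_defect_def using poly_root_defect_eval
  by (intro exI[of _ "\<lambda>j. poly (b j) \<theta>"]) blast

text \<open>If P and b r both vanished at \<theta>, then \<beta> = b(\<theta>) would satisfy (\<theta> - M) \<beta> = 0 and,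
  by differentiating, \<beta> + (\<theta> - M) \<beta>' = P'(\<theta>) e_r; pairing the latter with \<beta> and using the
  symmetry of M leaves |\<beta>|^2 = 0.\<close>
lemma poly_root_defect_nonvanishing:
  fixes M :: "real mat"
  assumes M: "M \<in> carrier_mat N N" "transpose_mat M = M" and r: "r < N"
    and d: "poly_root_defect M r b P" and nz: "\<exists>j<N. poly (b j) \<theta> \<noteq> 0"
  shows "poly P \<theta> \<noteq> 0 \<or> poly (b r) \<theta> \<noteq> 0"
proof (rule ccontr)
  assume "\<not> ?thesis"
  then have P0: "poly P \<theta> = 0" and br: "poly (b r) \<theta> = 0" by auto
  define \<beta> where "\<beta> j = poly (b j) \<theta>" for j
  define \<gamma> where "\<gamma> j = poly (pderiv (b j)) \<theta>" for j
  have dimM: "dim_row M = N" using M by simp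
  have ker: "\<theta> * \<beta> j - (\<Sum>l<N. M $$ (j, l) * \<beta> l) = 0" if "j < N" for j
    using poly_root_defect_eval[OF d, of j \<theta>] P0 that dimM unfolding \<beta>_def by auto
  have der: "\<beta> j + (\<theta> * \<gamma> j - (\<Sum>l<N. M $$ (j, l) * \<gamma> l))
      = (if j = r then poly (pderiv P) \<theta> else 0)" if "j < N" for j
    using poly_root_defect_pderiv_eval[OF d, of j \<theta>] that dimM unfolding \<beta>_def \<gamma>_def by simp
  have "(\<Sum>j<N. \<beta> j * (\<beta> j + (\<theta> * \<gamma> j - (\<Sum>l<N. M $$ (j, l) * \<gamma> l))))
      = (\<Sum>j<N. \<beta> j * (if j = r then poly (pderiv P) \<theta> else 0))"
    using der by (auto intro!: sum.cong)
  also have "\<dots> = 0" using br unfolding \<beta>_def by (simp add: if_distrib sum.If_cases)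
  finally have "(\<Sum>j<N. \<beta> j * \<beta> j)
      + (\<Sum>j<N. \<beta> j * (\<theta> * \<gamma> j - (\<Sum>l<N. M $$ (j, l) * \<gamma> l))) = 0"
    by (simp add: distrib_left sum.distrib)
  moreover have "(\<Sum>j<N. \<beta> j * (\<theta> * \<gamma> j - (\<Sum>l<N. M $$ (j, l) * \<gamma> l)))
      = (\<Sum>j<N. \<gamma> j * (\<theta> * \<beta> j - (\<Sum>l<N. M $$ (j, l) * \<beta> l)))"
    by (rule symmetric_residual_swap[OF M])
  ultimately have "(\<Sum>j<N. \<beta> j * \<beta> j) = 0" using ker by simp
  then have "\<forall>j\<in>{..<N}. \<beta> j * \<beta> j = 0" by (subst (asm) sum_nonneg_eq_0_iff) auto
  then show False using nz unfolding \<beta>_def by auto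
qed

lemma coprime_no_common_root:
  fixes p q :: "real poly"
  assumes "coprime p q" "poly p x = 0" "poly q x = 0"
  shows False
proof -
  have "[:-x, 1:] dvd p" "[:-x, 1:] dvd q" using assms by (simp_all add: poly_eq_0_iff_dvd)
  then have "is_unit [:-x, 1:]" using assms(1) coprime_common_divisor by blast
  then show False by (simp add: is_unit_pCons_iff)
qed

lemma alpha_root_defect_witness:
  fixes M :: "real mat"
  assumes M: "M \<in> carrier_mat N N" "transpose_mat M = M" and r: "r < N"
  obtains X Y where "root_defect M r \<theta> X Y" "X \<noteq> 0 \<or> Y \<noteq> 0"
    "poly (fst (quot_of_fract (alpha M r))) \<theta> * X = Y * poly (snd (quot_of_fract (alpha M r))) \<theta>"
proof -
  define a where "a \<equiv> \<lambda>l. adj_mat (char_poly_matrix M) $$ (l, r)"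
  have dimM: "dim_row M = N" using M by simp
  have d: "poly_root_defect M r a (char_poly M)" and ar: "a r = char_poly (mat_delete M r r)"
    using adjugate_column_poly_root_defect[OF M(1) r] unfolding a_def by auto
  have "mat_delete M r r \<in> carrier_mat (N - 1) (N - 1)" by (rule mat_delete_carrier[OF M(1)])
  from degree_monic_char_poly[OF this] have "char_poly (mat_delete M r r) \<noteq> 0" by auto
  then have ar0: "a r \<noteq> 0" using ar by simp
  obtain m b P where ab: "\<And>j. j < N \<Longrightarrow> a j = [:-\<theta>, 1:] ^ m * b j"
    and pP: "char_poly M = [:-\<theta>, 1:] ^ m * P" and db: "poly_root_defect M r b P"
    and nz: "\<exists>j<N. poly (b j) \<theta> \<noteq> 0"
    using poly_root_defect_cancel_root[OF d ar0, of \<theta>] r dimM by metis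
  have br: "b r \<noteq> 0" using ab[OF r] ar0 by auto
  obtain p0 q0 where pq: "quot_of_fract (alpha M r) = (p0, q0)" by (cases "quot_of_fract (alpha M r)")
  have q0: "q0 \<noteq> 0" using snd_quot_of_fract_nonzero[of "alpha M r"] pq by simp
  have "alpha M r = Fract P (b r)"
    unfolding alpha_def using ab[OF r] pP ar ar0 br by (simp add: eq_fract)
  then have "Fract p0 q0 = Fract P (b r)" by (metis Fract_quot_of_fract fst_conv snd_conv pq)
  then have "p0 * b r = P * q0" using q0 br by (simp add: eq_fract)
  then have "poly p0 \<theta> * poly (b r) \<theta> = poly P \<theta> * poly q0 \<theta>" by (metis poly_mult)
  then show thesis
    using that root_defect_of_poly_root_defect[OF db] poly_root_defect_nonvanishing[OF M r db nz] pq
    by auto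
qed

lemma root_defect_iff_regular:
  fixes M :: "real mat"
  assumes M: "M \<in> carrier_mat N N" "transpose_mat M = M" and r: "r < N"
    and regular: "\<not> rf_pole (alpha M r) \<theta>"
  shows "root_defect M r \<theta> t c \<longleftrightarrow> c = rf_val (alpha M r) \<theta> * t"
proof -
  obtain X Y where d: "root_defect M r \<theta> X Y" and XY: "X \<noteq> 0 \<or> Y \<noteq> 0"
    and rel: "poly (fst (quot_of_fract (alpha M r))) \<theta> * X = Y * poly (snd (quot_of_fract (alpha M r))) \<theta>"
    using alpha_root_defect_witness[OF M r] by blast
  have "poly (snd (quot_of_fract (alpha M r))) \<theta> \<noteq> 0" using regular unfolding rf_pole_def .
  then have Y: "Y = rf_val (alpha M r) \<theta> * X" using rel unfolding rf_val_def by (simp add: field_simps)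
  then have "X \<noteq> 0" using XY by auto
  then show ?thesis unfolding root_defect_iff_proportional[OF M r d XY] Y by auto
qed

lemma root_defect_iff_pole:
  fixes M :: "real mat"
  assumes M: "M \<in> carrier_mat N N" "transpose_mat M = M" and r: "r < N"
    and pole: "rf_pole (alpha M r) \<theta>"
  shows "root_defect M r \<theta> t c \<longleftrightarrow> t = 0"
proof -
  obtain X Y where d: "root_defect M r \<theta> X Y" and XY: "X \<noteq> 0 \<or> Y \<noteq> 0"
    and rel: "poly (fst (quot_of_fract (alpha M r))) \<theta> * X = Y * poly (snd (quot_of_fract (alpha M r))) \<theta>"
    using alpha_root_defect_witness[OF M r] by blast
  have "poly (fst (quot_of_fract (alpha M r))) \<theta> \<noteq> 0"
    using pole coprime_no_common_root[OF coprime_quot_of_fract] unfolding rf_pole_def by blast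
  then have "X = 0" using rel pole unfolding rf_pole_def by simp
  then show ?thesis unfolding root_defect_iff_proportional[OF M r d XY] using XY by simp
qed

section \<open>Eigenvectors of decorated paths\<close>

lemma offs_Suc: "offs M (Suc i) = offs M i + dim_row (M i)"
  unfolding offs_def by simp

lemma offs_mono: "i \<le> i' \<Longrightarrow> offs M i \<le> offs M i'"
  unfolding offs_def by (rule sum_mono2) auto

lemma offs_add_less: "i < n \<Longrightarrow> j < dim_row (M i) \<Longrightarrow> offs M i + j < offs M n"
  using offs_mono[of "Suc i" n M] by (simp add: offs_Suc)

lemma offs_block_unique:
  assumes "offs M i \<le> a" "a < offs M (Suc i)" "offs M i' \<le> a" "a < offs M (Suc i')"
  shows "i = i'"
proof (rule ccontr)
  assume "i \<noteq> i'"
  then have "offs M (Suc i) \<le> offs M i' \<or> offs M (Suc i') \<le> offs M i"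
    by (metis linorder_neqE_nat offs_mono Suc_leI)
  then show False using assms by auto
qed

lemma offs_block_exists: "a < offs M n \<Longrightarrow> \<exists>i<n. offs M i \<le> a \<and> a < offs M (Suc i)"
proof (induction n)
  case (Suc n)
  then show ?case by (cases "a < offs M n") (auto intro: less_SucI)
qed (simp add: offs_def)

lemma all_less_offs_iff:
  "(\<forall>a<offs M n. P a) \<longleftrightarrow> (\<forall>i<n. \<forall>j<dim_row (M i). P (offs M i + j))"
proof
  assume "\<forall>i<n. \<forall>j<dim_row (M i). P (offs M i + j)"
  moreover have "\<exists>i<n. \<exists>j<dim_row (M i). a = offs M i + j" if "a < offs M n" for a
    using offs_block_exists[OF that] by (metis add_diff_inverse_nat add_less_cancel_left not_le offs_Suc)
  ultimately show "\<forall>a<offs M n. P a" by blast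
qed (simp add: offs_add_less)

lemma pathv_less_offs_Suc: "r i < dim_row (M i) \<Longrightarrow> pathv M r i < offs M (Suc i)"
  unfolding pathv_def offs_Suc by simp

lemma pathv_less_offs: "i < n \<Longrightarrow> r i < dim_row (M i) \<Longrightarrow> pathv M r i < offs M n"
  unfolding pathv_def by (rule offs_add_less)

lemma pathv_less:
  assumes "i < i'" "r i < dim_row (M i)"
  shows "pathv M r i < pathv M r i'"
proof -
  have "pathv M r i < offs M (Suc i)" using assms(2) by (rule pathv_less_offs_Suc)
  also have "\<dots> \<le> offs M i'" using assms(1) by (intro offs_mono) simp
  finally show ?thesis unfolding pathv_def by simp
qed

lemma offs_add_eq_pathv_iff:
  assumes "r i' < dim_row (M i')" "j < dim_row (M i)"
  shows "offs M i + j = pathv M r i' \<longleftrightarrow> i' = i \<and> j = r i"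
proof (cases "i < i'")
  case True
  have "offs M i + j < offs M (Suc i)" using assms(2) by (simp add: offs_Suc)
  also have "\<dots> \<le> offs M i'" using True by (intro offs_mono) simp
  finally show ?thesis using True unfolding pathv_def by simp
next
  case False
  show ?thesis
  proof (cases "i' = i")
    case False
    then have "pathv M r i' < offs M (Suc i')" using assms(1) by (intro pathv_less_offs_Suc)
    also have "\<dots> \<le> offs M i" using False \<open>\<not> i < i'\<close> by (intro offs_mono) simp
    finally show ?thesis using False by simp
  qed (simp add: pathv_def)
qed

definition path_nbr_sum :: "nat \<Rightarrow> (nat \<Rightarrow> real) \<Rightarrow> nat \<Rightarrow> real" where
  "path_nbr_sum n x j = (if j = 0 then 0 else x (j - 1)) + (if Suc j < n then x (Suc j) else 0)"

lemma path_nbr_sum_cong: "(\<And>i. i < n \<Longrightarrow> x i = x' i) \<Longrightarrow> j < n \<Longrightarrow> path_nbr_sum n x j = path_nbr_sum n x' j"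
  unfolding path_nbr_sum_def by auto

lemma block_sum_entry:
  assumes i: "i < n" and j: "j < dim_row (M i)"
  shows "(\<Sum>i'<n. if offs M i' \<le> offs M i + j \<and> offs M i + j < offs M (Suc i')
        \<and> offs M i' \<le> b \<and> b < offs M (Suc i')
      then M i' $$ (offs M i + j - offs M i', b - offs M i') else 0)
    = (if offs M i \<le> b \<and> b < offs M (Suc i) then M i $$ (j, b - offs M i) else 0)"
proof -
  have "offs M i + j < offs M (Suc i)" using j by (simp add: offs_Suc)
  then have "(\<Sum>i'<n. if offs M i' \<le> offs M i + j \<and> offs M i + j < offs M (Suc i')
        \<and> offs M i' \<le> b \<and> b < offs M (Suc i')
      then M i' $$ (offs M i + j - offs M i', b - offs M i') else 0)
    = (\<Sum>i'<n. if i' = i then (if offs M i \<le> b \<and> b < offs M (Suc i)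
      then M i $$ (j, b - offs M i) else 0) else 0)"
    using offs_block_unique[of M i "offs M i + j"] by (intro sum.cong) auto
  then show ?thesis using i by simp
qed

lemma path_edge_iff:
  assumes R: "\<forall>i<n. r i < dim_row (M i)" and i: "i < n" and j: "j < dim_row (M i)"
  defines "a \<equiv> offs M i + j"
  shows "(\<exists>i'. Suc i' < n \<and> (a = pathv M r i' \<and> b = pathv M r (Suc i')
        \<or> b = pathv M r i' \<and> a = pathv M r (Suc i')))
      \<longleftrightarrow> j = r i \<and> (Suc i < n \<and> b = pathv M r (Suc i) \<or> 0 < i \<and> b = pathv M r (i - 1))"
proof -
  have a_pathv: "a = pathv M r i' \<longleftrightarrow> i' = i \<and> j = r i" if "i' < n" for i'
    unfolding a_def using offs_add_eq_pathv_iff[where M = M and r = r, OF R[rule_format, OF that] j] .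
  show ?thesis
  proof
    assume "\<exists>i'. Suc i' < n \<and> (a = pathv M r i' \<and> b = pathv M r (Suc i')
        \<or> b = pathv M r i' \<and> a = pathv M r (Suc i'))"
    then obtain i' where i': "Suc i' < n"
      and "a = pathv M r i' \<and> b = pathv M r (Suc i') \<or> b = pathv M r i' \<and> a = pathv M r (Suc i')"
      by blast
    then consider "a = pathv M r i'" "b = pathv M r (Suc i')" | "b = pathv M r i'" "a = pathv M r (Suc i')"
      by blast
    then show "j = r i \<and> (Suc i < n \<and> b = pathv M r (Suc i) \<or> 0 < i \<and> b = pathv M r (i - 1))"
    proof cases
      case 1
      then show ?thesis using a_pathv[of i'] i' by simp
    next
      case 2
      then have "Suc i' = i" "j = r i" using a_pathv[OF i'] by simp_all
      then show ?thesis using 2 by auto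
    qed
  next
    assume "j = r i \<and> (Suc i < n \<and> b = pathv M r (Suc i) \<or> 0 < i \<and> b = pathv M r (i - 1))"
    moreover have "a = pathv M r i" if "j = r i" using a_pathv[OF i] that by simp
    ultimately show "\<exists>i'. Suc i' < n \<and> (a = pathv M r i' \<and> b = pathv M r (Suc i')
        \<or> b = pathv M r i' \<and> a = pathv M r (Suc i'))"
    proof (elim conjE disjE)
      assume "0 < i" "b = pathv M r (i - 1)" "j = r i"
      then show ?thesis using \<open>j = r i \<Longrightarrow> a = pathv M r i\<close> i
        by (intro exI[of _ "i - 1"]) simp
    qed blast
  qed
qed

lemma decorated_path_loop_entry:
  assumes R: "\<forall>i<n. r i < dim_row (M i)"
    and i: "i < n" and j: "j < dim_row (M i)" and b: "b < offs M n"
  shows "decorated_path_loop n M r L $$ (offs M i + j, b) =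
    (if offs M i \<le> b \<and> b < offs M (Suc i) then M i $$ (j, b - offs M i) else 0)
    + (if (j = r i \<and> Suc i < n) \<and> b = pathv M r (Suc i) then 1 else 0)
    + (if (j = r i \<and> 0 < i) \<and> b = pathv M r (i - 1) then 1 else 0)
    + (if (j = r i \<and> i = n - 1) \<and> b = pathv M r i then L else 0)"
proof -
  have "pathv M r (i - 1) < pathv M r (Suc i)"
    using R i by (intro pathv_less) auto
  then have distinct: "pathv M r (i - 1) \<noteq> pathv M r (Suc i)" by simp
  have loop: "offs M i + j = pathv M r (n - 1) \<and> b = offs M i + j
      \<longleftrightarrow> j = r i \<and> i = n - 1 \<and> b = pathv M r i"
    using offs_add_eq_pathv_iff[where M = M and r = r and i' = "n - 1", OF _ j] R i
    unfolding pathv_def by auto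
  have "decorated_path_loop n M r L $$ (offs M i + j, b)
      = (if offs M i \<le> b \<and> b < offs M (Suc i) then M i $$ (j, b - offs M i) else 0)
        + (if j = r i \<and> (Suc i < n \<and> b = pathv M r (Suc i) \<or> 0 < i \<and> b = pathv M r (i - 1))
           then 1 else 0)
        + (if j = r i \<and> i = n - 1 \<and> b = pathv M r i then L else 0)"
    unfolding decorated_path_loop_def decorated_path_def index_mat(1)[OF offs_add_less[where M = M, OF i j] b]
      prod.case block_sum_entry[where M = M, OF i j] path_edge_iff[where M = M, OF R i j] loop ..
  moreover have "(if j = r i \<and> (Suc i < n \<and> b = pathv M r (Suc i) \<or> 0 < i \<and> b = pathv M r (i - 1))
        then 1 else 0)
      = (if (j = r i \<and> Suc i < n) \<and> b = pathv M r (Suc i) then 1 else 0)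
        + (if (j = r i \<and> 0 < i) \<and> b = pathv M r (i - 1) then 1 else (0::real))"
    using distinct by auto
  ultimately show ?thesis by simp
qed

lemma sum_offs_block:
  assumes "i < n"
  shows "(\<Sum>b<offs M n. if offs M i \<le> b \<and> b < offs M (Suc i) then g (b - offs M i) else 0)
    = (\<Sum>j<dim_row (M i). g j)"
proof -
  have "(\<Sum>b<offs M n. if offs M i \<le> b \<and> b < offs M (Suc i) then g (b - offs M i) else 0)
      = (\<Sum>b\<in>{0 + offs M i..<dim_row (M i) + offs M i}. g (b - offs M i))"
    using offs_mono[of "Suc i" n M] assms
    by (intro sum.mono_neutral_cong_right) (auto simp: offs_Suc)
  also have "\<dots> = (\<Sum>j<dim_row (M i). g j)"
    by (subst sum.shift_bounds_nat_ivl) (simp add: atLeast0LessThan)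
  finally show ?thesis .
qed

lemma sum_indicator_times:
  fixes x :: real and N :: nat
  assumes "c \<Longrightarrow> p < N"
  shows "(\<Sum>b<N. (if c \<and> b = p then x else 0) * f b) = (if c then x * f p else 0)"
proof (cases c)
  case True
  have "(\<Sum>b<N. (if c \<and> b = p then x else 0) * f b) = (\<Sum>b\<in>{..<N}. if b = p then x * f p else 0)"
    using True by (intro sum.cong) auto
  also have "\<dots> = x * f p" using assms True by (subst sum.delta) auto
  finally show ?thesis using True by simp
qed simp

lemma decorated_path_loop_row:
  assumes R: "\<forall>i<n. r i < dim_row (M i)" and i: "i < n" and j: "j < dim_row (M i)"
  shows "(\<Sum>b<offs M n. decorated_path_loop n M r L $$ (offs M i + j, b) * f b)
    = (\<Sum>j'<dim_row (M i). M i $$ (j, j') * f (offs M i + j'))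
      + (if j = r i then path_nbr_sum n (\<lambda>i. f (pathv M r i)) i
          + (if i = n - 1 then L * f (pathv M r i) else 0) else 0)"
proof -
  let ?p = "pathv M r"
  let ?blk = "\<lambda>b. if offs M i \<le> b \<and> b < offs M (Suc i) then M i $$ (j, b - offs M i) else 0"
  have p: "?p i' < offs M n" if "i' < n" for i'
    using pathv_less_offs[where M = M and r = r, OF that R[rule_format, OF that]] .
  have p1: "Suc i < n \<Longrightarrow> ?p (Suc i) < offs M n" and p2: "0 < i \<Longrightarrow> ?p (i - 1) < offs M n"
    and p3: "i = n - 1 \<Longrightarrow> ?p i < offs M n"
    using p i by auto
  have "(\<Sum>b<offs M n. ?blk b * f b)
      = (\<Sum>b<offs M n. if offs M i \<le> b \<and> b < offs M (Suc i)
          then M i $$ (j, b - offs M i) * f (offs M i + (b - offs M i)) else 0)"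
    by (intro sum.cong) auto
  also have "\<dots> = (\<Sum>j'<dim_row (M i). M i $$ (j, j') * f (offs M i + j'))"
    using i by (rule sum_offs_block)
  finally have blk: "(\<Sum>b<offs M n. ?blk b * f b) = (\<Sum>j'<dim_row (M i). M i $$ (j, j') * f (offs M i + j'))" .
  have "(\<Sum>b<offs M n. decorated_path_loop n M r L $$ (offs M i + j, b) * f b)
      = (\<Sum>b<offs M n. (?blk b + (if (j = r i \<and> Suc i < n) \<and> b = ?p (Suc i) then 1 else 0)
          + (if (j = r i \<and> 0 < i) \<and> b = ?p (i - 1) then 1 else 0)
          + (if (j = r i \<and> i = n - 1) \<and> b = ?p i then L else 0)) * f b)"
    by (intro sum.cong) (simp_all add: decorated_path_loop_entry[OF R i j])
  also have "\<dots> = (\<Sum>b<offs M n. ?blk b * f b)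
      + (\<Sum>b<offs M n. (if (j = r i \<and> Suc i < n) \<and> b = ?p (Suc i) then 1 else 0) * f b)
      + (\<Sum>b<offs M n. (if (j = r i \<and> 0 < i) \<and> b = ?p (i - 1) then 1 else 0) * f b)
      + (\<Sum>b<offs M n. (if (j = r i \<and> i = n - 1) \<and> b = ?p i then L else 0) * f b)"
    by (simp only: distrib_right sum.distrib)
  also have "\<dots> = (\<Sum>j'<dim_row (M i). M i $$ (j, j') * f (offs M i + j'))
      + (if j = r i \<and> Suc i < n then 1 * f (?p (Suc i)) else 0)
      + (if j = r i \<and> 0 < i then 1 * f (?p (i - 1)) else 0)
      + (if j = r i \<and> i = n - 1 then L * f (?p i) else 0)"
    using p1 p2 p3
    unfolding blk by (subst (1 2 3) sum_indicator_times) auto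
  finally show ?thesis unfolding path_nbr_sum_def by simp
qed

lemma decorated_path_loop_carrier:
  "decorated_path_loop n M r L \<in> carrier_mat (offs M n) (offs M n)"
  unfolding decorated_path_loop_def by simp

lemma decorated_path_loop_eigenspace_iff:
  assumes R: "\<forall>i<n. r i < dim_row (M i)"
  shows "v \<in> eigenspace (decorated_path_loop n M r L) \<theta> \<longleftrightarrow> v \<in> carrier_vec (offs M n) \<and>
    (\<forall>i<n. \<forall>j<dim_row (M i).
      \<theta> * v $ (offs M i + j) - (\<Sum>j'<dim_row (M i). M i $$ (j, j') * v $ (offs M i + j'))
      = (if j = r i then path_nbr_sum n (\<lambda>i. v $ pathv M r i) i
          + (if i = n - 1 then L * v $ pathv M r i else 0) else 0))"
proof -
  have row: "(\<Sum>l<offs M n. decorated_path_loop n M r L $$ (offs M i + j, l) * v $ l)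
        = \<theta> * v $ (offs M i + j)
      \<longleftrightarrow> \<theta> * v $ (offs M i + j) - (\<Sum>j'<dim_row (M i). M i $$ (j, j') * v $ (offs M i + j'))
        = (if j = r i then path_nbr_sum n (\<lambda>i. v $ pathv M r i) i
          + (if i = n - 1 then L * v $ pathv M r i else 0) else 0)"
    if "i < n" "j < dim_row (M i)" for i j
    by (subst decorated_path_loop_row[OF R that], rule iffI) linarith+
  from eigenspace_iff[OF decorated_path_loop_carrier] show ?thesis
    unfolding all_less_offs_iff using row by blast
qed

text \<open>The values at the path vertices of a \<theta>-eigenvector of the decorated path with a loop of
  weight L at its last path vertex: each rooted graph sees the rest of the path only through the
  defect at its root.\<close>
definition path_trace ::
  "(nat \<Rightarrow> real mat) \<Rightarrow> (nat \<Rightarrow> nat) \<Rightarrow> nat \<Rightarrow> real \<Rightarrow> real \<Rightarrow> (nat \<Rightarrow> real) \<Rightarrow> bool" where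
  "path_trace M r n L \<theta> y \<longleftrightarrow> (\<forall>i<n. root_defect (M i) (r i) \<theta> (y i)
     (path_nbr_sum n y i + (if i = n - 1 then L * y i else 0)))"

lemma path_trace_of_eigenvector:
  assumes R: "\<forall>i<n. r i < dim_row (M i)"
    and v: "v \<in> eigenspace (decorated_path_loop n M r L) \<theta>"
  shows "path_trace M r n L \<theta> (\<lambda>i. v $ pathv M r i)"
  unfolding path_trace_def root_defect_def
proof (intro allI impI)
  fix i assume i: "i < n"
  have "\<forall>j<dim_row (M i). \<theta> * v $ (offs M i + j)
      - (\<Sum>j'<dim_row (M i). M i $$ (j, j') * v $ (offs M i + j'))
      = (if j = r i then path_nbr_sum n (\<lambda>i. v $ pathv M r i) i
          + (if i = n - 1 then L * v $ pathv M r i else 0) else 0)"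
    using v i unfolding decorated_path_loop_eigenspace_iff[OF R] by blast
  moreover have "v $ (offs M i + r i) = v $ pathv M r i" by (simp add: pathv_def)
  ultimately show "\<exists>u. u (r i) = v $ pathv M r i \<and> (\<forall>j<dim_row (M i).
      \<theta> * u j - (\<Sum>l<dim_row (M i). M i $$ (j, l) * u l) =
      (if j = r i then path_nbr_sum n (\<lambda>i. v $ pathv M r i) i
        + (if i = n - 1 then L * v $ pathv M r i else 0) else 0))"
    by (intro exI[of _ "\<lambda>j. v $ (offs M i + j)"]) simp
qed

lemma eigenvector_of_path_trace:
  assumes R: "\<forall>i<n. r i < dim_row (M i)" and y: "path_trace M r n L \<theta> y"
  obtains v where "v \<in> eigenspace (decorated_path_loop n M r L) \<theta>" "\<And>i. i < n \<Longrightarrow> v $ pathv M r i = y i"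
proof -
  have "\<forall>i. \<exists>u. i < n \<longrightarrow> u (r i) = y i \<and> (\<forall>j<dim_row (M i).
      \<theta> * u j - (\<Sum>l<dim_row (M i). M i $$ (j, l) * u l) =
      (if j = r i then path_nbr_sum n y i + (if i = n - 1 then L * y i else 0) else 0))"
    using y unfolding path_trace_def root_defect_def by blast
  from choice[OF this] obtain U where U: "\<And>i. i < n \<Longrightarrow> U i (r i) = y i \<and> (\<forall>j<dim_row (M i).
      \<theta> * U i j - (\<Sum>l<dim_row (M i). M i $$ (j, l) * U i l) =
      (if j = r i then path_nbr_sum n y i + (if i = n - 1 then L * y i else 0) else 0))"
    by blast
  define blk where "blk a = (THE i. i < n \<and> offs M i \<le> a \<and> a < offs M (Suc i))" for a
  have blk: "blk (offs M i + j) = i" if "i < n" "j < dim_row (M i)" for i j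
    unfolding blk_def using that offs_block_unique[of M _ "offs M i + j" i]
    by (intro the_equality) (auto simp: offs_Suc)
  define v where "v = vec (offs M n) (\<lambda>a. U (blk a) (a - offs M (blk a)))"
  have v: "v $ (offs M i + j) = U i j" if "i < n" "j < dim_row (M i)" for i j
    unfolding v_def using blk[OF that] offs_add_less[where M = M, OF that] by simp
  have vp: "v $ pathv M r i = y i" if "i < n" for i
    using v[OF that R[rule_format, OF that]] U[OF that] unfolding pathv_def by simp
  have nbr: "path_nbr_sum n (\<lambda>i. v $ pathv M r i) i = path_nbr_sum n y i" if "i < n" for i
    using vp that by (intro path_nbr_sum_cong) auto
  have "\<forall>i<n. \<forall>j<dim_row (M i).
      \<theta> * v $ (offs M i + j) - (\<Sum>j'<dim_row (M i). M i $$ (j, j') * v $ (offs M i + j'))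
      = (if j = r i then path_nbr_sum n (\<lambda>i. v $ pathv M r i) i
          + (if i = n - 1 then L * v $ pathv M r i else 0) else 0)"
  proof (intro allI impI)
    fix i j assume i: "i < n" and j: "j < dim_row (M i)"
    have "(\<Sum>j'<dim_row (M i). M i $$ (j, j') * v $ (offs M i + j'))
        = (\<Sum>j'<dim_row (M i). M i $$ (j, j') * U i j')"
      using v[OF i] by simp
    then show "\<theta> * v $ (offs M i + j) - (\<Sum>j'<dim_row (M i). M i $$ (j, j') * v $ (offs M i + j'))
      = (if j = r i then path_nbr_sum n (\<lambda>i. v $ pathv M r i) i
          + (if i = n - 1 then L * v $ pathv M r i else 0) else 0)"
      unfolding nbr[OF i] vp[OF i] v[OF i j] using U[OF i] j by simp
  qed
  moreover have "v \<in> carrier_vec (offs M n)" unfolding v_def by simp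
  ultimately have "v \<in> eigenspace (decorated_path_loop n M r L) \<theta>"
    unfolding decorated_path_loop_eigenspace_iff[OF R] by blast
  then show thesis using vp by (rule that)
qed

lemma eigenspace_path_values_iff:
  assumes R: "\<forall>i<n. r i < dim_row (M i)" and n: "0 < n"
  shows "(\<exists>v\<in>eigenspace (decorated_path_loop n M r L) \<theta>. v $ pathv M r 0 \<noteq> 0)
      \<longleftrightarrow> (\<exists>y. path_trace M r n L \<theta> y \<and> y 0 \<noteq> 0)"
    and "(\<forall>v\<in>eigenspace (decorated_path_loop n M r L) \<theta>. v $ pathv M r 0 = s * v $ pathv M r (n - 1))
      \<longleftrightarrow> (\<forall>y. path_trace M r n L \<theta> y \<longrightarrow> y 0 = s * y (n - 1))"
proof -
  have trace: "\<exists>v\<in>eigenspace (decorated_path_loop n M r L) \<theta>. v $ pathv M r 0 = y 0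
      \<and> v $ pathv M r (n - 1) = y (n - 1)" if y: "path_trace M r n L \<theta> y" for y
  proof -
    obtain v where "v \<in> eigenspace (decorated_path_loop n M r L) \<theta>"
      "\<And>i. i < n \<Longrightarrow> v $ pathv M r i = y i"
      using eigenvector_of_path_trace[OF R y] by blast
    then show ?thesis using n by (intro bexI[of _ v]) auto
  qed
  note eigenvector = path_trace_of_eigenvector[OF R]
  show "(\<exists>v\<in>eigenspace (decorated_path_loop n M r L) \<theta>. v $ pathv M r 0 \<noteq> 0)
      \<longleftrightarrow> (\<exists>y. path_trace M r n L \<theta> y \<and> y 0 \<noteq> 0)"
  proof
    assume "\<exists>v\<in>eigenspace (decorated_path_loop n M r L) \<theta>. v $ pathv M r 0 \<noteq> 0"
    then obtain v where "v \<in> eigenspace (decorated_path_loop n M r L) \<theta>" "v $ pathv M r 0 \<noteq> 0" ..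
    with eigenvector show "\<exists>y. path_trace M r n L \<theta> y \<and> y 0 \<noteq> 0" by blast
  next
    assume "\<exists>y. path_trace M r n L \<theta> y \<and> y 0 \<noteq> 0"
    then obtain y where "path_trace M r n L \<theta> y" "y 0 \<noteq> 0" by blast
    with trace show "\<exists>v\<in>eigenspace (decorated_path_loop n M r L) \<theta>. v $ pathv M r 0 \<noteq> 0"
      by metis
  qed
  show "(\<forall>v\<in>eigenspace (decorated_path_loop n M r L) \<theta>. v $ pathv M r 0 = s * v $ pathv M r (n - 1))
      \<longleftrightarrow> (\<forall>y. path_trace M r n L \<theta> y \<longrightarrow> y 0 = s * y (n - 1))"
  proof
    assume H: "\<forall>v\<in>eigenspace (decorated_path_loop n M r L) \<theta>. v $ pathv M r 0 = s * v $ pathv M r (n - 1)"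
    show "\<forall>y. path_trace M r n L \<theta> y \<longrightarrow> y 0 = s * y (n - 1)"
    proof (intro allI impI)
      fix y assume "path_trace M r n L \<theta> y"
      with trace H show "y 0 = s * y (n - 1)" by metis
    qed
  next
    assume "\<forall>y. path_trace M r n L \<theta> y \<longrightarrow> y 0 = s * y (n - 1)"
    with eigenvector show "\<forall>v\<in>eigenspace (decorated_path_loop n M r L) \<theta>.
        v $ pathv M r 0 = s * v $ pathv M r (n - 1)" by blast
  qed
qed

lemma eig_support_decorated_path_loop_iff:
  assumes R: "\<forall>i<n. r i < dim_row (M i)" and n: "0 < n"
  shows "\<theta> \<in> eig_support (decorated_path_loop n M r L) (pathv M r 0)
    \<longleftrightarrow> (\<exists>y. path_trace M r n L \<theta> y \<and> y 0 \<noteq> 0)"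
  using eigenspace_path_values_iff(1)[OF R n] eig_support_iff[OF decorated_path_loop_carrier
      pathv_less_offs[where M = M and r = r, OF n R[rule_format, OF n]]] by simp

lemma Phi_decorated_path_loop_iff:
  assumes R: "\<forall>i<n. r i < dim_row (M i)" and n: "0 < n"
  shows "\<theta> \<in> Phi (decorated_path_loop n M r L) s (pathv M r 0) (pathv M r (n - 1))
    \<longleftrightarrow> (\<exists>y. path_trace M r n L \<theta> y \<and> y 0 \<noteq> 0)
      \<and> (\<forall>y. path_trace M r n L \<theta> y \<longrightarrow> y 0 = s * y (n - 1))"
proof -
  have n1: "n - 1 < n" using n by simp
  show ?thesis
    using eigenspace_path_values_iff[OF R n] Phi_iff[OF decorated_path_loop_carrier
        pathv_less_offs[where M = M and r = r, OF n R[rule_format, OF n]]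
        pathv_less_offs[where M = M and r = r, OF n1 R[rule_format, OF n1]]] by simp
qed

lemma strongly_cospectral_path_trace:
  assumes R: "\<forall>i<n. r i < dim_row (M i)" and n: "0 < n"
    and sc: "strongly_cospectral (decorated_path_loop n M r L) (pathv M r 0) (pathv M r (n - 1))"
    and y: "path_trace M r n L \<theta> y" "y 0 \<noteq> 0"
  shows "(\<forall>y. path_trace M r n L \<theta> y \<longrightarrow> y 0 = y (n - 1))
    \<or> (\<forall>y. path_trace M r n L \<theta> y \<longrightarrow> y 0 = - y (n - 1))"
proof -
  have n1: "n - 1 < n" using n by simp
  obtain w where "w \<in> eigenspace (decorated_path_loop n M r L) \<theta>" "w $ pathv M r 0 \<noteq> 0"
    using eigenspace_path_values_iff(1)[OF R n] y by blast
  from strongly_cospectral_eigenspace[OF decorated_path_loop_carrier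
      pathv_less_offs[where M = M and r = r, OF n R[rule_format, OF n]]
      pathv_less_offs[where M = M and r = r, OF n1 R[rule_format, OF n1]] sc this]
  show ?thesis
    using eigenspace_path_values_iff(2)[OF R n, of L \<theta> 1]
      eigenspace_path_values_iff(2)[OF R n, of L \<theta> "-1"]
    by simp
qed

section \<open>Weighted paths and the three-term recurrence\<close>

definition path_recurrence :: "nat \<Rightarrow> (nat \<Rightarrow> real) \<Rightarrow> (nat \<Rightarrow> real) \<Rightarrow> bool" where
  "path_recurrence n a y \<longleftrightarrow> (\<forall>j<n. path_nbr_sum n y j = a j * y j)"

lemma path_recurrence_cong:
  "(\<And>j. j < n \<Longrightarrow> y j = y' j) \<Longrightarrow> path_recurrence n a y \<longleftrightarrow> path_recurrence n a y'"
  unfolding path_recurrence_def using path_nbr_sum_cong[of n y y'] by auto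

lemma wpath_carrier: "wpath n d \<in> carrier_mat n n"
  unfolding wpath_def by simp

lemma wpath_row:
  assumes j: "j < n"
  shows "(\<Sum>l<n. wpath n d $$ (j, l) * x l) = d j * x j + path_nbr_sum n x j"
proof -
  have "(\<Sum>l<n. wpath n d $$ (j, l) * x l) = (\<Sum>l<n. (if l = j then d j * x l else 0)
      + (if l = j - 1 then (if 0 < j then x l else 0) else 0) + (if l = Suc j then x l else 0))"
    using j unfolding wpath_def by (intro sum.cong) auto
  also have "\<dots> = d j * x j + (if 0 < j then x (j - 1) else 0) + (if Suc j < n then x (Suc j) else 0)"
    using j by (simp add: sum.distrib)
  finally show ?thesis unfolding path_nbr_sum_def by simp
qed

lemma wpath_eigenspace_iff:
  "v \<in> eigenspace (wpath n d) \<theta> \<longleftrightarrow> v \<in> carrier_vec n \<and> path_recurrence n (\<lambda>j. \<theta> - d j) (\<lambda>j. v $ j)"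
proof -
  have "(\<Sum>l<n. wpath n d $$ (j, l) * v $ l) = \<theta> * v $ j
      \<longleftrightarrow> path_nbr_sum n (\<lambda>j. v $ j) j = (\<theta> - d j) * v $ j" if "j < n" for j
    unfolding wpath_row[OF that] left_diff_distrib by (rule iffI) linarith+
  then show ?thesis
    unfolding eigenspace_iff[OF wpath_carrier] path_recurrence_def by blast
qed

lemma vec_in_wpath_eigenspace:
  "path_recurrence n (\<lambda>j. \<theta> - d j) y \<Longrightarrow> vec n y \<in> eigenspace (wpath n d) \<theta>"
  unfolding wpath_eigenspace_iff using path_recurrence_cong[of n "\<lambda>j. vec n y $ j" y] by simp

lemma wpath_path_values:
  assumes n: "0 < n"
  shows "(\<exists>w\<in>eigenspace (wpath n d) \<theta>. w $ 0 \<noteq> 0) \<longleftrightarrow> (\<exists>y. path_recurrence n (\<lambda>j. \<theta> - d j) y \<and> y 0 \<noteq> 0)"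
    and "(\<forall>w\<in>eigenspace (wpath n d) \<theta>. w $ 0 = s * w $ (n - 1))
      \<longleftrightarrow> (\<forall>y. path_recurrence n (\<lambda>j. \<theta> - d j) y \<longrightarrow> y 0 = s * y (n - 1))"
proof -
  have vec: "vec n y \<in> eigenspace (wpath n d) \<theta> \<and> vec n y $ 0 = y 0 \<and> vec n y $ (n - 1) = y (n - 1)"
    if "path_recurrence n (\<lambda>j. \<theta> - d j) y" for y
    using vec_in_wpath_eigenspace[OF that] n by simp
  show "(\<exists>w\<in>eigenspace (wpath n d) \<theta>. w $ 0 \<noteq> 0) \<longleftrightarrow> (\<exists>y. path_recurrence n (\<lambda>j. \<theta> - d j) y \<and> y 0 \<noteq> 0)"
    using vec wpath_eigenspace_iff by metis
  show "(\<forall>w\<in>eigenspace (wpath n d) \<theta>. w $ 0 = s * w $ (n - 1))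
      \<longleftrightarrow> (\<forall>y. path_recurrence n (\<lambda>j. \<theta> - d j) y \<longrightarrow> y 0 = s * y (n - 1))"
    using vec wpath_eigenspace_iff by metis
qed

lemma eig_support_wpath_iff:
  assumes "0 < n"
  shows "\<theta> \<in> eig_support (wpath n d) 0 \<longleftrightarrow> (\<exists>y. path_recurrence n (\<lambda>j. \<theta> - d j) y \<and> y 0 \<noteq> 0)"
  using eig_support_iff[OF wpath_carrier assms] wpath_path_values(1)[OF assms] by simp

lemma Phi_wpath_iff:
  assumes "0 < n"
  shows "\<theta> \<in> Phi (wpath n d) s 0 (n - 1) \<longleftrightarrow> (\<exists>y. path_recurrence n (\<lambda>j. \<theta> - d j) y \<and> y 0 \<noteq> 0)
    \<and> (\<forall>y. path_recurrence n (\<lambda>j. \<theta> - d j) y \<longrightarrow> y 0 = s * y (n - 1))"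
proof -
  have "n - 1 < n" using assms by simp
  with Phi_iff[OF wpath_carrier assms this] wpath_path_values[OF assms] show ?thesis by simp
qed

lemma path_recurrence_proportional:
  assumes y: "path_recurrence n a y" and w: "path_recurrence n a w"
  shows "j < n \<Longrightarrow> w j * y 0 = w 0 * y j"
proof (induction j rule: less_induct)
  case (less j)
  show ?case
  proof (cases j)
    case (Suc m)
    show ?thesis
    proof (cases m)
      case 0
      have "path_nbr_sum n y 0 = a 0 * y 0" "path_nbr_sum n w 0 = a 0 * w 0"
        using y w less.prems unfolding path_recurrence_def by auto
      then have "y 1 = a 0 * y 0" "w 1 = a 0 * w 0"
        using less.prems Suc 0 unfolding path_nbr_sum_def by auto
      then show ?thesis using Suc 0 by (simp add: algebra_simps)
    next
      case (Suc m')
      have j: "j = Suc (Suc m')" using \<open>j = Suc m\<close> Suc by simp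
      have "path_nbr_sum n y (Suc m') = a (Suc m') * y (Suc m')"
        "path_nbr_sum n w (Suc m') = a (Suc m') * w (Suc m')"
        using y w less.prems j unfolding path_recurrence_def by auto
      then have e: "y j = a (Suc m') * y (Suc m') - y m'" "w j = a (Suc m') * w (Suc m') - w m'"
        using less.prems j unfolding path_nbr_sum_def by auto
      have "w m' * y 0 = w 0 * y m'" "w (Suc m') * y 0 = w 0 * y (Suc m')"
        using less.IH less.prems j by simp_all
      then show ?thesis unfolding e by (simp add: algebra_simps)
    qed
  qed simp
qed

lemma path_nbr_sum_reflect:
  "j < n \<Longrightarrow> path_nbr_sum n (\<lambda>i. y (n - 1 - i)) j = path_nbr_sum n y (n - 1 - j)"
  unfolding path_nbr_sum_def by (auto simp: Suc_diff_Suc diff_diff_add)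

lemma path_nbr_sum_lincomb:
  "path_nbr_sum n (\<lambda>i. y i + c * w i) j = path_nbr_sum n y j + c * path_nbr_sum n w j"
  unfolding path_nbr_sum_def by (simp add: algebra_simps)

lemma path_nbr_sum_smult: "path_nbr_sum n (\<lambda>i. c * y i) j = c * path_nbr_sum n y j"
  unfolding path_nbr_sum_def by (simp add: algebra_simps)

lemma path_nbr_sum_truncate:
  "Suc j < m \<Longrightarrow> m \<le> n \<Longrightarrow> path_nbr_sum m y j = path_nbr_sum n y j"
  unfolding path_nbr_sum_def by simp

lemma path_recurrence_reflect:
  assumes sym: "\<And>j. j < n \<Longrightarrow> a (n - 1 - j) = a j" and y: "path_recurrence n a y"
  shows "path_recurrence n a (\<lambda>j. y (n - 1 - j))"
  unfolding path_recurrence_def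
proof (intro allI impI)
  fix j assume j: "j < n"
  have "path_nbr_sum n y (n - 1 - j) = a (n - 1 - j) * y (n - 1 - j)"
    using y j unfolding path_recurrence_def by simp
  then show "path_nbr_sum n (\<lambda>j. y (n - 1 - j)) j = a j * y (n - 1 - j)"
    using path_nbr_sum_reflect[OF j] sym[OF j] by simp
qed

lemma path_recurrence_lincomb:
  "path_recurrence n a y \<Longrightarrow> path_recurrence n a w \<Longrightarrow> path_recurrence n a (\<lambda>j. y j + c * w j)"
  unfolding path_recurrence_def path_nbr_sum_lincomb by (simp add: algebra_simps)

text \<open>The symmetry turns the missing neighbour z k of the last vertex into the loop term
  s * z (k - 1).\<close>
lemma path_recurrence_fold:
  assumes n: "n = 2 * k" and z: "path_recurrence n a z"
    and refl: "\<And>j. j < n \<Longrightarrow> z (n - 1 - j) = s * z j"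
  shows "path_recurrence k (\<lambda>j. a j - (if j = k - 1 then s else 0)) z"
  unfolding path_recurrence_def
proof (intro allI impI)
  fix j assume j: "j < k"
  have eq: "path_nbr_sum n z j = a j * z j" using z j n unfolding path_recurrence_def by simp
  show "path_nbr_sum k z j = (a j - (if j = k - 1 then s else 0)) * z j"
  proof (cases "j = k - 1")
    case True
    have "z k = s * z (k - 1)" using refl[of "k - 1"] n j by (simp add: numeral_2_eq_2)
    then have "path_nbr_sum n z j = path_nbr_sum k z j + s * z j"
      unfolding path_nbr_sum_def using True n j by auto
    then show ?thesis using eq True by (simp add: algebra_simps)
  next
    case False
    then have "path_nbr_sum n z j = path_nbr_sum k z j"
      using j n by (intro path_nbr_sum_truncate[symmetric]) auto
    then show ?thesis using eq False by simp
  qed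
qed

lemma path_recurrence_at_reflection:
  assumes sym: "\<And>j. j < n \<Longrightarrow> a (n - 1 - j) = a j" and refl: "\<And>j. j < n \<Longrightarrow> y (n - 1 - j) = s * y j"
    and j: "j < n" and eq: "path_nbr_sum n y (n - 1 - j) = a (n - 1 - j) * y (n - 1 - j)"
  shows "path_nbr_sum n y j = a j * y j"
proof -
  let ?j' = "n - 1 - j"
  have j': "?j' < n" "n - 1 - ?j' = j" using j by auto
  have "path_nbr_sum n y j = path_nbr_sum n (\<lambda>i. y (n - 1 - i)) ?j'"
    using path_nbr_sum_reflect[OF j'(1), of y] j'(2) by simp
  also have "\<dots> = path_nbr_sum n (\<lambda>i. s * y i) ?j'"
    using refl by (intro path_nbr_sum_cong[OF _ j'(1)]) simp
  also have "\<dots> = s * (a ?j' * y ?j')" using eq by (simp add: path_nbr_sum_smult)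
  also have "\<dots> = a j * y j" using refl[OF j'(1)] sym[OF j] j'(2) by (simp add: algebra_simps)
  finally show ?thesis .
qed

lemma path_recurrence_unfold:
  assumes n: "n = 2 * k" and s: "s * s = 1" and sym: "\<And>j. j < n \<Longrightarrow> a (n - 1 - j) = a j"
    and x: "path_recurrence k (\<lambda>j. a j - (if j = k - 1 then s else 0)) x"
  defines "y \<equiv> \<lambda>j. if j < k then x j else s * x (n - 1 - j)"
  shows "path_recurrence n a y"
proof -
  have refl: "y (n - 1 - j) = s * y j" if "j < n" for j
    using that n s unfolding y_def by (auto simp: mult.assoc[symmetric])
  have low: "path_nbr_sum n y j = a j * y j" if j: "j < k" for j
  proof -
    have "path_nbr_sum k y j = path_nbr_sum k x j"
      unfolding y_def by (rule path_nbr_sum_cong[OF _ j]) simp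
    moreover have "path_nbr_sum n y j = path_nbr_sum k y j + (if j = k - 1 then s * y j else 0)"
    proof (cases "j = k - 1")
      case True
      have "y k = s * y (k - 1)" using refl[of "k - 1"] n j by (simp add: numeral_2_eq_2)
      then show ?thesis unfolding path_nbr_sum_def using True n j by auto
    next
      case False
      then have "path_nbr_sum n y j = path_nbr_sum k y j"
        using j n by (intro path_nbr_sum_truncate[symmetric]) auto
      then show ?thesis using False by simp
    qed
    moreover have "y j = x j" using j unfolding y_def by simp
    ultimately show ?thesis
      using x j unfolding path_recurrence_def by (cases "j = k - 1") (simp_all add: algebra_simps)
  qed
  show ?thesis unfolding path_recurrence_def
  proof (intro allI impI)
    fix j assume j: "j < n"
    show "path_nbr_sum n y j = a j * y j"
    proof (cases "j < k")
      case False
      then have "n - 1 - j < k" using j n by auto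
      then have "path_nbr_sum n y (n - 1 - j) = a (n - 1 - j) * y (n - 1 - j)" by (rule low)
      with sym refl j show ?thesis by (rule path_recurrence_at_reflection)
    qed (rule low)
  qed
qed

lemma path_recurrence_fold_iff:
  assumes n: "n = 2 * k" and k: "1 \<le> k" and s: "s * s = 1"
    and sym: "\<And>j. j < n \<Longrightarrow> a (n - 1 - j) = a j"
  shows "((\<exists>y. path_recurrence n a y \<and> y 0 \<noteq> 0) \<and> (\<forall>y. path_recurrence n a y \<longrightarrow> y 0 = s * y (n - 1)))
    \<longleftrightarrow> (\<exists>x. path_recurrence k (\<lambda>j. a j - (if j = k - 1 then s else 0)) x \<and> x 0 \<noteq> 0)"
proof
  assume "(\<exists>y. path_recurrence n a y \<and> y 0 \<noteq> 0) \<and> (\<forall>y. path_recurrence n a y \<longrightarrow> y 0 = s * y (n - 1))"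
  then obtain y where y: "path_recurrence n a y" "y 0 \<noteq> 0" "y 0 = s * y (n - 1)" by blast
  define z where "z j = y j + s * y (n - 1 - j)" for j
  have "path_recurrence n a z"
    unfolding z_def using y(1) path_recurrence_reflect[OF sym y(1)] by (rule path_recurrence_lincomb)
  moreover have "z (n - 1 - j) = s * z j" if "j < n" for j
    using that s unfolding z_def by (simp add: algebra_simps mult.assoc[symmetric])
  ultimately have "path_recurrence k (\<lambda>j. a j - (if j = k - 1 then s else 0)) z"
    using n by (intro path_recurrence_fold)
  moreover have "z 0 = 2 * y 0" using y(3) s unfolding z_def by (simp add: algebra_simps)
  ultimately show "\<exists>x. path_recurrence k (\<lambda>j. a j - (if j = k - 1 then s else 0)) x \<and> x 0 \<noteq> 0"
    using y(2) by auto
next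
  assume "\<exists>x. path_recurrence k (\<lambda>j. a j - (if j = k - 1 then s else 0)) x \<and> x 0 \<noteq> 0"
  then obtain x where x: "path_recurrence k (\<lambda>j. a j - (if j = k - 1 then s else 0)) x" "x 0 \<noteq> 0"
    by blast
  define y where "y j = (if j < k then x j else s * x (n - 1 - j))" for j
  have y: "path_recurrence n a y"
    unfolding y_def using path_recurrence_unfold[OF n s sym x(1)] by (simp add: y_def)
  have y0: "y 0 = x 0" and yn: "y (n - 1) = s * x 0" unfolding y_def using n k by auto
  have "w 0 = s * w (n - 1)" if w: "path_recurrence n a w" for w
  proof -
    have "w (n - 1) * x 0 = (s * w 0) * x 0"
      using path_recurrence_proportional[OF y w, of "n - 1"] n k y0 yn by (simp add: algebra_simps)
    then have "w (n - 1) = s * w 0" using x(2) by simp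
    then show ?thesis using s by (simp add: mult.assoc[symmetric])
  qed
  then show "(\<exists>y. path_recurrence n a y \<and> y 0 \<noteq> 0) \<and> (\<forall>y. path_recurrence n a y \<longrightarrow> y 0 = s * y (n - 1))"
    using y y0 x(2) by auto
qed

lemma Phi_wpath_iff_eig_support_fold:
  assumes n: "n = 2 * k" and k: "1 \<le> k" and s: "s * s = 1"
    and sym: "\<And>j. j < n \<Longrightarrow> a (n - 1 - j) = a j"
  shows "\<theta> \<in> Phi (wpath n (\<lambda>j. \<theta> - a j)) s 0 (n - 1)
    \<longleftrightarrow> \<theta> \<in> eig_support (wpath k (\<lambda>j. \<theta> - a j + (if j = k - 1 then s else 0))) 0"
proof -
  have n0: "0 < n" and k0: "0 < k" using n k by auto
  have a: "(\<lambda>j. \<theta> - (\<theta> - a j)) = a"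
    and a': "(\<lambda>j. \<theta> - (\<theta> - a j + (if j = k - 1 then s else 0))) = (\<lambda>j. a j - (if j = k - 1 then s else 0))"
    by auto
  show ?thesis
    unfolding Phi_wpath_iff[OF n0] eig_support_wpath_iff[OF k0] a a'
    by (intro path_recurrence_fold_iff[OF n k s] sym)
qed

section \<open>Reduction to weighted paths\<close>

lemma decorated_path_eq_loop_0: "decorated_path n M r = decorated_path_loop n M r 0"
  by (rule eq_matI) (auto simp: decorated_path_loop_def decorated_path_def)

lemma path_trace_iff_path_recurrence:
  assumes MC: "\<forall>i<n. M i \<in> carrier_mat (dim_row (M i)) (dim_row (M i))"
    and T: "\<forall>i<n. transpose_mat (M i) = M i" and R: "\<forall>i<n. r i < dim_row (M i)"
    and wd: "path_well_defined n M r \<theta>"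
  shows "path_trace M r n L \<theta> y \<longleftrightarrow>
    path_recurrence n (\<lambda>i. rf_val (alpha (M i) (r i)) \<theta> - (if i = n - 1 then L else 0)) y"
proof -
  have "root_defect (M i) (r i) \<theta> (y i) (path_nbr_sum n y i + (if i = n - 1 then L * y i else 0))
      \<longleftrightarrow> path_nbr_sum n y i = (rf_val (alpha (M i) (r i)) \<theta> - (if i = n - 1 then L else 0)) * y i"
    if i: "i < n" for i
  proof -
    have "root_defect (M i) (r i) \<theta> (y i) (path_nbr_sum n y i + (if i = n - 1 then L * y i else 0))
        \<longleftrightarrow> path_nbr_sum n y i + (if i = n - 1 then L * y i else 0) = rf_val (alpha (M i) (r i)) \<theta> * y i"
      using root_defect_iff_regular[OF MC[rule_format, OF i] T[rule_format, OF i] R[rule_format, OF i]] wd i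
      unfolding path_well_defined_def by blast
    then show ?thesis by (cases "i = n - 1") (auto simp: algebra_simps)
  qed
  then show ?thesis unfolding path_trace_def path_recurrence_def by blast
qed

lemma Phi_decorated_path_iff_Phi_path_at:
  assumes MC: "\<forall>i<n. M i \<in> carrier_mat (dim_row (M i)) (dim_row (M i))"
    and T: "\<forall>i<n. transpose_mat (M i) = M i" and R: "\<forall>i<n. r i < dim_row (M i)"
    and n: "0 < n" and wd: "path_well_defined n M r \<theta>"
  shows "\<theta> \<in> Phi (decorated_path n M r) s (pathv M r 0) (pathv M r (n - 1))
    \<longleftrightarrow> \<theta> \<in> Phi (path_at n M r \<theta>) s 0 (n - 1)"
proof -
  have "(\<lambda>i. rf_val (alpha (M i) (r i)) \<theta> - (if i = n - 1 then 0 else 0))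
      = (\<lambda>i. \<theta> - (\<theta> - rf_val (alpha (M i) (r i)) \<theta>))" by simp
  then show ?thesis
    unfolding decorated_path_eq_loop_0 Phi_decorated_path_loop_iff[OF R n] path_at_def
      Phi_wpath_iff[OF n] path_trace_iff_path_recurrence[OF MC T R wd] by simp
qed

lemma eig_support_decorated_path_loop_iff_path_loop_at:
  assumes MC: "\<forall>i<k. M i \<in> carrier_mat (dim_row (M i)) (dim_row (M i))"
    and T: "\<forall>i<k. transpose_mat (M i) = M i" and R: "\<forall>i<k. r i < dim_row (M i)"
    and k: "0 < k" and wd: "path_well_defined k M r \<theta>"
  shows "\<theta> \<in> eig_support (decorated_path_loop k M r s) (pathv M r 0)
    \<longleftrightarrow> \<theta> \<in> eig_support (path_loop_at k M r s \<theta>) 0"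
proof -
  have "(\<lambda>i. rf_val (alpha (M i) (r i)) \<theta> - (if i = k - 1 then s else 0))
      = (\<lambda>i. \<theta> - (\<theta> - rf_val (alpha (M i) (r i)) \<theta> + (if i = k - 1 then s else 0)))" by auto
  then show ?thesis
    unfolding eig_support_decorated_path_loop_iff[OF R k] path_loop_at_def
      eig_support_wpath_iff[OF k] path_trace_iff_path_recurrence[OF MC T R wd] by simp
qed

lemma path_trace_truncate:
  assumes MC: "\<forall>i<n. M i \<in> carrier_mat (dim_row (M i)) (dim_row (M i))"
    and T: "\<forall>i<n. transpose_mat (M i) = M i" and R: "\<forall>i<n. r i < dim_row (M i)"
    and i: "i < n" and pole: "rf_pole (alpha (M i) (r i)) \<theta>"
    and y: "\<And>j. j < i \<Longrightarrow> root_defect (M j) (r j) \<theta> (y j) (path_nbr_sum n y j)" and yi: "y i = 0"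
  shows "path_trace M r n 0 \<theta> (\<lambda>j. if j < i then y j else 0)"
  unfolding path_trace_def
proof (intro allI impI)
  let ?z = "\<lambda>j. if j < i then y j else 0"
  fix j assume j: "j < n"
  consider "j < i" | "j = i" | "i < j" by linarith
  then show "root_defect (M j) (r j) \<theta> (?z j) (path_nbr_sum n ?z j + (if j = n - 1 then 0 * ?z j else 0))"
  proof cases
    case 1
    have "?z (Suc j) = y (Suc j)" using 1 yi by (cases "Suc j = i") auto
    then have "path_nbr_sum n ?z j = path_nbr_sum n y j" unfolding path_nbr_sum_def using 1 by simp
    then show ?thesis using y[OF 1] 1 by (simp cong: if_cong)
  next
    case 2
    then show ?thesis
      using root_defect_iff_pole[OF MC[rule_format, OF i] T[rule_format, OF i] R[rule_format, OF i] pole]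
      by simp
  next
    case 3
    have "path_nbr_sum n ?z j = 0" unfolding path_nbr_sum_def using 3 by auto
    then show ?thesis using 3 root_defect_zero by simp
  qed
qed

lemma path_trace_prefix:
  assumes n: "n = 2 * k" and y: "path_trace M r n 0 \<theta> y \<or> path_trace M r k s \<theta> y" and j: "Suc j < k"
  shows "root_defect (M j) (r j) \<theta> (y j) (path_nbr_sum n y j)"
  using y
proof
  assume "path_trace M r n 0 \<theta> y"
  then have "root_defect (M j) (r j) \<theta> (y j) (path_nbr_sum n y j + (if j = n - 1 then 0 * y j else 0))"
    using j n unfolding path_trace_def by simp
  then show ?thesis by (simp cong: if_cong)
next
  assume "path_trace M r k s \<theta> y"
  then have "root_defect (M j) (r j) \<theta> (y j) (path_nbr_sum k y j + (if j = k - 1 then s * y j else 0))"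
    using j unfolding path_trace_def by simp
  moreover have "path_nbr_sum k y j = path_nbr_sum n y j"
    using j n by (intro path_nbr_sum_truncate) auto
  moreover have "j \<noteq> k - 1" using j by simp
  ultimately show ?thesis by simp
qed

lemma pole_in_first_half:
  assumes n: "n = 2 * k"
    and A: "\<And>i. i < n \<Longrightarrow> alpha (M i) (r i) = alpha (M (n - 1 - i)) (r (n - 1 - i))"
    and "\<not> path_well_defined n M r \<theta>"
  obtains i where "i < k" "rf_pole (alpha (M i) (r i)) \<theta>"
proof -
  obtain i0 where i0: "i0 < n" "rf_pole (alpha (M i0) (r i0)) \<theta>"
    using assms(3) unfolding path_well_defined_def by blast
  show thesis
  proof (cases "i0 < k")
    case False
    then show thesis using that[of "n - 1 - i0"] i0 A[OF i0(1)] n by auto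
  qed (use that i0 in blast)
qed

text \<open>A pole at a vertex i < k forces y i = 0, and cutting y off at i leaves an eigenvector of the
  decorated path that is nonzero at the first path vertex but zero at the last one, which strong
  cospectrality excludes.\<close>
lemma path_well_defined_of_strongly_cospectral:
  assumes n: "n = 2 * k" and k: "1 \<le> k"
    and MC: "\<forall>i<n. M i \<in> carrier_mat (dim_row (M i)) (dim_row (M i))"
    and T: "\<forall>i<n. transpose_mat (M i) = M i" and R: "\<forall>i<n. r i < dim_row (M i)"
    and A: "\<And>i. i < n \<Longrightarrow> alpha (M i) (r i) = alpha (M (n - 1 - i)) (r (n - 1 - i))"
    and sc: "strongly_cospectral (decorated_path n M r) (pathv M r 0) (pathv M r (n - 1))"
    and supp: "\<theta> \<in> eig_support (decorated_path n M r) (pathv M r 0)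
      \<or> \<theta> \<in> eig_support (decorated_path_loop k M r s) (pathv M r 0)"
  shows "path_well_defined n M r \<theta>"
proof (rule ccontr)
  assume "\<not> path_well_defined n M r \<theta>"
  then obtain i where i: "i < k" and pole: "rf_pole (alpha (M i) (r i)) \<theta>"
    using pole_in_first_half[where M = M and r = r, OF n A] by blast
  have n0: "0 < n" and k0: "0 < k" and iN: "i < n" and Rk: "\<forall>i<k. r i < dim_row (M i)"
    using n k i R by auto
  obtain y where y: "path_trace M r n 0 \<theta> y \<or> path_trace M r k s \<theta> y" and y0: "y 0 \<noteq> 0"
    using supp unfolding decorated_path_eq_loop_0 eig_support_decorated_path_loop_iff[OF R n0]
      eig_support_decorated_path_loop_iff[OF Rk k0] by blast
  have "\<exists>c. root_defect (M i) (r i) \<theta> (y i) c" using y i iN unfolding path_trace_def by blast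
  then have yi: "y i = 0"
    using root_defect_iff_pole[OF MC[rule_format, OF iN] T[rule_format, OF iN] R[rule_format, OF iN] pole]
    by blast
  define z where "z j = (if j < i then y j else 0)" for j
  have z: "path_trace M r n 0 \<theta> z"
    unfolding z_def using path_trace_prefix[OF n y] i yi
    by (intro path_trace_truncate[OF MC T R iN pole]) auto
  have "i \<noteq> 0" using yi y0 by metis
  then have z0: "z 0 \<noteq> 0" using y0 unfolding z_def by simp
  have zn: "z (n - 1) = 0" using i n unfolding z_def by simp
  from strongly_cospectral_path_trace[OF R n0 sc[unfolded decorated_path_eq_loop_0] z z0]
  have "z 0 = z (n - 1) \<or> z 0 = - z (n - 1)" using z by blast
  then show False using z0 zn by auto
qed

theorem lemma10:
  fixes k n :: nat and M :: "nat \<Rightarrow> real mat" and r :: "nat \<Rightarrow> nat"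
    and s \<theta> :: real
  assumes "k \<ge> 1" and "n = 2 * k"
    and "\<And>i. i < n \<Longrightarrow> M i \<in> carrier_mat (dim_row (M i)) (dim_row (M i))"
    and "\<And>i. i < n \<Longrightarrow> transpose_mat (M i) = M i"
    and "\<And>i. i < n \<Longrightarrow> r i < dim_row (M i)"
    and "\<And>i. i < n \<Longrightarrow> alpha (M i) (r i) = alpha (M (n - 1 - i)) (r (n - 1 - i))"
    and "strongly_cospectral (decorated_path n M r) (pathv M r 0) (pathv M r (n - 1))"
    and "s \<in> {1, -1}"
  shows "(\<theta> \<in> Phi (decorated_path n M r) s (pathv M r 0) (pathv M r (n - 1))
          \<longleftrightarrow> path_well_defined n M r \<theta> \<and> \<theta> \<in> Phi (path_at n M r \<theta>) s 0 (n - 1))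
       \<and> (path_well_defined n M r \<theta> \<and> \<theta> \<in> Phi (path_at n M r \<theta>) s 0 (n - 1)
          \<longleftrightarrow> path_well_defined n M r \<theta> \<and> \<theta> \<in> eig_support (path_loop_at k M r s \<theta>) 0)
       \<and> (path_well_defined n M r \<theta> \<and> \<theta> \<in> eig_support (path_loop_at k M r s \<theta>) 0
          \<longleftrightarrow> \<theta> \<in> eig_support (decorated_path_loop k M r s) (pathv M r 0))"
proof -
  note k = assms(1) and n = assms(2) and A = assms(6)
  have MC: "\<forall>i<m. M i \<in> carrier_mat (dim_row (M i)) (dim_row (M i))"
    and T: "\<forall>i<m. transpose_mat (M i) = M i" and R: "\<forall>i<m. r i < dim_row (M i)"
    if "m \<le> n" for m using assms(3-5) that by auto
  have n0: "0 < n" and k0: "0 < k" and kn: "k \<le> n" and ss: "s * s = 1" using n k assms(8) by auto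
  have wd: "path_well_defined n M r \<theta>"
    if "\<theta> \<in> eig_support (decorated_path n M r) (pathv M r 0)
      \<or> \<theta> \<in> eig_support (decorated_path_loop k M r s) (pathv M r 0)"
    using path_well_defined_of_strongly_cospectral[OF n k MC[OF order_refl] T[OF order_refl]
        R[OF order_refl] A assms(7) that] .
  have "\<theta> \<in> Phi (decorated_path n M r) s (pathv M r 0) (pathv M r (n - 1))
      \<Longrightarrow> \<theta> \<in> eig_support (decorated_path n M r) (pathv M r 0)" unfolding Phi_def by blast
  moreover have "path_well_defined n M r \<theta> \<Longrightarrow>
      \<theta> \<in> Phi (decorated_path n M r) s (pathv M r 0) (pathv M r (n - 1))
      \<longleftrightarrow> \<theta> \<in> Phi (path_at n M r \<theta>) s 0 (n - 1)"
    by (rule Phi_decorated_path_iff_Phi_path_at[OF MC[OF order_refl] T[OF order_refl] R[OF order_refl] n0])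
  moreover have "\<theta> \<in> Phi (path_at n M r \<theta>) s 0 (n - 1) \<longleftrightarrow> \<theta> \<in> eig_support (path_loop_at k M r s \<theta>) 0"
  proof -
    have "rf_val (alpha (M (n - 1 - j)) (r (n - 1 - j))) \<theta> = rf_val (alpha (M j) (r j)) \<theta>"
      if "j < n" for j using A[OF that] by simp
    then show ?thesis unfolding path_at_def path_loop_at_def
      by (intro Phi_wpath_iff_eig_support_fold[OF n k ss])
  qed
  moreover have "path_well_defined n M r \<theta> \<Longrightarrow>
      \<theta> \<in> eig_support (decorated_path_loop k M r s) (pathv M r 0)
      \<longleftrightarrow> \<theta> \<in> eig_support (path_loop_at k M r s \<theta>) 0"
    using kn by (intro eig_support_decorated_path_loop_iff_path_loop_at[OF MC[OF kn] T[OF kn] R[OF kn] k0])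
      (auto simp: path_well_defined_def)
  ultimately show ?thesis using wd by blast
qed

end
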